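(* Let $m\ge3$, $C$ a set of $m$ candidates, $T$ the set of all $m!$ strict rankings of $C$, $w=(w_1,\dots,w_m)$ with $1=w_1\ge\cdots\ge w_m=0$, $\bar w=(w_1+\cdots+w_m)/m$, and $\sigma_t(\alpha)=w_i$ where $i$ is the position of $\alpha$ in $t\in T$. Let $(N_t)_{t\in T}$ be nonnegative integers with $\sum_tN_t=n$ and $|\alpha|=\sum_tN_t\sigma_t(\alpha)$. Suppose $|a|>|\alpha|$ for all $\alpha\ne a$, and $b\ne a$ satisfies $|b|\ge|\alpha|$ for all $\alpha\ne a$. Let $T_b$ be the set of types ranking $b$ first, $T_i$ ($1\le i\le m-1$) the set of types ranking $b$ in position $i$ and $a$ in position $i+1$, and $T_{ba}=\bigcup_iT_i$. Consider the linear programs (P2): $\min\sum_{t\in T_{ba}}x_t$ s.t. $\sum_{t\in T_b}y_t(1-\sigma_t(\alpha))-\sum_{t\in T_{ba}}x_t(\sigma_t(b)-\sigma_t(\alpha))\ge|\alpha|-|b|$ for all $\alpha\ne b$, $\sum_{t\in T_b}y_t=\sum_{t\in T_{ba}}x_t$, $x_t\ge0$, $y_t\ge0$; (P4): $\min\sum_{i=1}^{m-1}z_i$ s.t. $\sum_{i=1}^{m-1}(1-w_i+w_{i+1})z_i\ge|a|-|b|$, $\sum_{i=1}^{m-1}(1-w_i)z_i\ge n\bar w-|b|$, $z_i\ge0$; (P5): $\max\ (|a|-n\bar w)\lambda+(n\bar w-|b|)\mu$ s.t. $w_{i+1}\lambda+(1-w_i)\mu\le1$ for $i=1,\dots,m-1$,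 and $0\le\lambda\le\mu$. Then (P2) and (P4) have the same optimal value as (P5). Moreover, (P5) is unbounded if and only if (P2) and (P4) are infeasible. *)

theory Defs
  imports "HOL-Analysis.Analysis"
begin

text \<open>Strict rankings (types) of a candidate set C: lists enumerating C without repetition;
  the first list entry is ranked first.\<close>
definition rankings :: "'c set \<Rightarrow> 'c list set" where
  "rankings C = {t. distinct t \<and> set t = C}"

definition pos :: "'c list \<Rightarrow> 'c \<Rightarrow> nat" where
  "pos t \<alpha> = Suc (LEAST i. i < length t \<and> t ! i = \<alpha>)"

definition sigma :: "(nat \<Rightarrow> real) \<Rightarrow> 'c list \<Rightarrow> 'c \<Rightarrow> real" where
  "sigma w t \<alpha> = w (pos t \<alpha>)"

definition score :: "'c set \<Rightarrow> (nat \<Rightarrow> real) \<Rightarrow> ('c list \<Rightarrow> nat) \<Rightarrow> 'c \<Rightarrow> real" where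
  "score C w N \<alpha> = (\<Sum>t\<in>rankings C. real (N t) * sigma w t \<alpha>)"

definition Tb :: "'c set \<Rightarrow> 'c \<Rightarrow> 'c list set" where
  "Tb C b = {t \<in> rankings C. pos t b = 1}"

definition Tba :: "'c set \<Rightarrow> nat \<Rightarrow> 'c \<Rightarrow> 'c \<Rightarrow> 'c list set" where
  "Tba C m a b = (\<Union>i\<in>{1..m-1}. {t \<in> rankings C. pos t b = i \<and> pos t a = i + 1})"

definition wbar :: "(nat \<Rightarrow> real) \<Rightarrow> nat \<Rightarrow> real" where
  "wbar w m = (\<Sum>i=1..m. w i) / real m"

definition total :: "'c set \<Rightarrow> ('c list \<Rightarrow> nat) \<Rightarrow> nat" where
  "total C N = (\<Sum>t\<in>rankings C. N t)"

text \<open>Feasible set of (P2); the variables x_t (t in T_ba) and y_t (t in T_b) are given as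
  functions on all lists, only their values on T_ba resp. T_b matter.\<close>
definition feas2 :: "'c set \<Rightarrow> nat \<Rightarrow> (nat \<Rightarrow> real) \<Rightarrow> ('c list \<Rightarrow> nat) \<Rightarrow> 'c \<Rightarrow> 'c
    \<Rightarrow> ('c list \<Rightarrow> real) \<Rightarrow> ('c list \<Rightarrow> real) \<Rightarrow> bool" where
  "feas2 C m w N a b x y \<longleftrightarrow>
     (\<forall>\<alpha>\<in>C. \<alpha> \<noteq> b \<longrightarrow>
        (\<Sum>t\<in>Tb C b. y t * (1 - sigma w t \<alpha>))
          - (\<Sum>t\<in>Tba C m a b. x t * (sigma w t b - sigma w t \<alpha>))
        \<ge> score C w N \<alpha> - score C w N b)
     \<and> (\<Sum>t\<in>Tb C b. y t) = (\<Sum>t\<in>Tba C m a b. x t)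
     \<and> (\<forall>t\<in>Tba C m a b. x t \<ge> 0) \<and> (\<forall>t\<in>Tb C b. y t \<ge> 0)"

definition feas4 :: "'c set \<Rightarrow> nat \<Rightarrow> (nat \<Rightarrow> real) \<Rightarrow> ('c list \<Rightarrow> nat) \<Rightarrow> 'c \<Rightarrow> 'c
    \<Rightarrow> (nat \<Rightarrow> real) \<Rightarrow> bool" where
  "feas4 C m w N a b z \<longleftrightarrow>
     (\<Sum>i=1..m-1. (1 - w i + w (i+1)) * z i) \<ge> score C w N a - score C w N b
     \<and> (\<Sum>i=1..m-1. (1 - w i) * z i) \<ge> real (total C N) * wbar w m - score C w N b
     \<and> (\<forall>i\<in>{1..m-1}. z i \<ge> 0)"

definition feas5 :: "nat \<Rightarrow> (nat \<Rightarrow> real) \<Rightarrow> real \<Rightarrow> real \<Rightarrow> bool" where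
  "feas5 m w l u \<longleftrightarrow>
     (\<forall>i\<in>{1..m-1}. w (i+1) * l + (1 - w i) * u \<le> 1) \<and> 0 \<le> l \<and> l \<le> u"

definition obj5 :: "'c set \<Rightarrow> nat \<Rightarrow> (nat \<Rightarrow> real) \<Rightarrow> ('c list \<Rightarrow> nat) \<Rightarrow> 'c \<Rightarrow> 'c
    \<Rightarrow> real \<Rightarrow> real \<Rightarrow> real" where
  "obj5 C m w N a b l u =
     (score C w N a - real (total C N) * wbar w m) * l
     + (real (total C N) * wbar w m - score C w N b) * u"

text \<open>Optimal values in the extended reals: a minimisation problem has value Inf of the
  objective over its feasible set (= +infinity if infeasible); (P5) has value Sup
  (= +infinity if unbounded).\<close>
definition val2 :: "'c set \<Rightarrow> nat \<Rightarrow> (nat \<Rightarrow> real) \<Rightarrow> ('c list \<Rightarrow> nat) \<Rightarrow> 'c \<Rightarrow> 'c \<Rightarrow> ereal" where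
  "val2 C m w N a b = Inf {ereal (\<Sum>t\<in>Tba C m a b. x t) | x y. feas2 C m w N a b x y}"

definition val4 :: "'c set \<Rightarrow> nat \<Rightarrow> (nat \<Rightarrow> real) \<Rightarrow> ('c list \<Rightarrow> nat) \<Rightarrow> 'c \<Rightarrow> 'c \<Rightarrow> ereal" where
  "val4 C m w N a b = Inf {ereal (\<Sum>i=1..m-1. z i) | z. feas4 C m w N a b z}"

definition val5 :: "'c set \<Rightarrow> nat \<Rightarrow> (nat \<Rightarrow> real) \<Rightarrow> ('c list \<Rightarrow> nat) \<Rightarrow> 'c \<Rightarrow> 'c \<Rightarrow> ereal" where
  "val5 C m w N a b = Sup {ereal (obj5 C m w N a b l u) | l u. feas5 m w l u}"

end

theory Submission
  imports Defs
begin

text \<open>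
  The values of (P2) and (P4) agree because both programs attain the same sets of objective
  values. A solution of (P2) moves x t voters of type t in T_i to types ranking b first; summing
  x over each T_i gives z i, the constraint of (P2) for a gives the first constraint of (P4), and
  the sum of all constraints of (P2) gives the second one. Conversely, z i voters of a type in T_i
  with some u on top and some l at the bottom are moved to the type obtained by swapping b with
  u, and a fraction \<theta> of them also swap a with l; drawing the pair (u, l) from a coupling whose
  marginals are weighted by the leads of b over the other candidates keeps every constraint of
  (P2) satisfied.

  (P4) is a covering program with two constraints and nonnegative columns, and (P5) is its dual
  in the variables (\<lambda>, \<mu> - \<lambda>). Strong duality, including unboundedness of the dual exactly
  when the primal is infeasible, follows by separating the point c / s from the closed convex set
  conv(columns) + nonpositive orthant, where c is the right-hand side of (P4) and s is below its
  value.
\<close>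

section \<open>Rankings and positions\<close>

lemma pos_nth:
  assumes "t \<in> rankings C" "k < length t"
  shows "pos t (t ! k) = Suc k"
proof -
  have d: "distinct t" using assms by (simp add: rankings_def)
  have "(LEAST j. j < length t \<and> t ! j = t ! k) = k"
  proof (rule Least_equality)
    show "k < length t \<and> t ! k = t ! k" using assms by simp
    show "k \<le> j" if "j < length t \<and> t ! j = t ! k" for j
      using that assms(2) d nth_eq_iff_index_eq[of t j k] by simp
  qed
  then show ?thesis by (simp add: pos_def)
qed

lemma finite_rankings: "finite C \<Longrightarrow> finite (rankings C)"
proof -
  assume "finite C"
  have "rankings C \<subseteq> {xs. set xs \<subseteq> C \<and> length xs \<le> card C}"
    by (auto simp: rankings_def distinct_card)
  then show ?thesis
    using finite_lists_length_le[OF \<open>finite C\<close>] finite_subset by blast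
qed

lemma length_ranking: "t \<in> rankings C \<Longrightarrow> length t = card C"
  by (simp add: rankings_def distinct_card[symmetric])

lemma bij_betw_pos: "t \<in> rankings C \<Longrightarrow> bij_betw (pos t) C {1..card C}"
proof -
  assume t: "t \<in> rankings C"
  have "pos t ` C = {1..card C}"
  proof (intro equalityI subsetI)
    fix k assume "k \<in> pos t ` C"
    then obtain x where "x \<in> C" "k = pos t x" by blast
    moreover obtain j where "j < length t" "t ! j = x"
      using t \<open>x \<in> C\<close> by (auto simp: rankings_def in_set_conv_nth)
    ultimately show "k \<in> {1..card C}"
      using pos_nth[OF t] length_ranking[OF t] by auto
  next
    fix k assume k: "k \<in> {1..card C}"
    then have "k - 1 < length t" "t ! (k - 1) \<in> C"
      using t length_ranking[OF t] by (auto simp: rankings_def)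
    moreover have "pos t (t ! (k - 1)) = k"
      using pos_nth[OF t \<open>k - 1 < length t\<close>] k by simp
    ultimately show "k \<in> pos t ` C" by (metis image_eqI)
  qed
  moreover have "inj_on (pos t) C"
  proof (rule inj_onI)
    fix x y assume "x \<in> C" "y \<in> C" "pos t x = pos t y"
    moreover obtain j k where "j < length t" "t ! j = x" "k < length t" "t ! k = y"
      using t \<open>x \<in> C\<close> \<open>y \<in> C\<close> by (auto simp: rankings_def in_set_conv_nth)
    ultimately show "x = y"
      using pos_nth[OF t] by auto
  qed
  ultimately show ?thesis by (simp add: bij_betw_def)
qed

lemma sum_pos_ranking:
  "t \<in> rankings C \<Longrightarrow> (\<Sum>x\<in>C. f (pos t x)) = (\<Sum>k=1..card C. f k)"
  using sum.reindex_bij_betw[OF bij_betw_pos] by blast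

lemma ranking_map_bij: "t \<in> rankings C \<Longrightarrow> bij_betw h C D \<Longrightarrow> map h t \<in> rankings D"
  by (auto simp: rankings_def distinct_map bij_betw_def)

lemma pos_map_bij:
  assumes t: "t \<in> rankings C" and h: "bij_betw h C D" and x: "x \<in> C"
  shows "pos (map h t) (h x) = pos t x"
proof -
  obtain k where k: "k < length t" "t ! k = x"
    using t x by (auto simp: rankings_def in_set_conv_nth)
  have "pos (map h t) (h x) = Suc k"
    using pos_nth[OF ranking_map_bij[OF t h], of k] k by simp
  moreover have "pos t x = Suc k"
    using pos_nth[OF t, of k] k by simp
  ultimately show ?thesis
    by simp
qed

lemma ranking_of_bij:
  assumes h: "bij_betw h C {1..card C}"
  shows "\<exists>t\<in>rankings C. \<forall>x\<in>C. pos t x = h x"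
proof
  define t where "t = map (inv_into C h) [1..<Suc (card C)]"
  have "bij_betw (inv_into C h) {1..card C} C"
    using h by (rule bij_betw_inv_into)
  moreover have "set [1..<Suc (card C)] = {1..card C}"
    by auto
  ultimately show t_rank: "t \<in> rankings C"
    by (simp add: t_def rankings_def distinct_map bij_betw_def)
  show "\<forall>x\<in>C. pos t x = h x"
  proof
    fix x assume x: "x \<in> C"
    then have hx: "h x \<in> {1..card C}" using h by (auto simp: bij_betw_def)
    then have "t ! (h x - 1) = inv_into C h (h x)"
      by (auto simp: t_def nth_upt simp del: upt_Suc)
    also have "\<dots> = x"
      using h x by (simp add: bij_betw_def)
    finally have "t ! (h x - 1) = x" .
    moreover have "h x - 1 < length t"
      using hx length_ranking[OF t_rank] by auto
    ultimately show "pos t x = h x"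
      using pos_nth[OF t_rank] hx by fastforce
  qed
qed

lemma ranking_with_positions:
  assumes "finite C" "D \<subseteq> C" "inj_on f D" "f ` D \<subseteq> {1..card C}"
  shows "\<exists>t\<in>rankings C. \<forall>x\<in>D. pos t x = f x"
proof -
  have "card (C - D) = card ({1..card C} - f ` D)"
    using assms by (simp add: card_Diff_subset finite_subset card_image)
  then obtain g where g: "bij_betw g (C - D) ({1..card C} - f ` D)"
    using assms finite_same_card_bij by (metis finite_Diff finite_atLeastAtMost)
  define h where "h x = (if x \<in> D then f x else g x)" for x
  have "bij_betw h D (f ` D)"
    using assms(3) by (simp add: h_def bij_betw_def inj_on_def)
  moreover have "bij_betw h (C - D) ({1..card C} - f ` D)"
    using g by (rule bij_betw_cong[THEN iffD1, rotated]) (simp add: h_def)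
  ultimately have "bij_betw h (D \<union> (C - D)) (f ` D \<union> ({1..card C} - f ` D))"
    by (rule bij_betw_combine) blast
  then have "bij_betw h C {1..card C}"
    using assms(2,4) by (simp add: Un_absorb1 Un_Diff_cancel)
  then obtain t where t: "t \<in> rankings C" "\<forall>x\<in>C. pos t x = h x"
    using ranking_of_bij by blast
  have "\<forall>x\<in>D. pos t x = f x"
    using t(2) assms(2) by (auto simp: h_def)
  with t(1) show ?thesis
    by blast
qed

lemma pos_inj:
  assumes "t \<in> rankings C" "x \<in> C" "y \<in> C" "pos t x = pos t y"
  shows "x = y"
  using bij_betw_pos[OF assms(1)] assms(2-4) by (auto simp: bij_betw_def inj_on_def)

lemma pos_hd:
  assumes "t \<in> rankings C" "C \<noteq> {}"
  shows "hd t \<in> C" and "pos t (hd t) = 1"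
proof -
  have "t \<noteq> []"
    using assms by (auto simp: rankings_def)
  then show "hd t \<in> C"
    using assms(1) by (auto simp: rankings_def)
  show "pos t (hd t) = 1"
    using pos_nth[OF assms(1), of 0] \<open>t \<noteq> []\<close> by (simp add: hd_conv_nth)
qed

lemma pos_last:
  assumes "t \<in> rankings C" "C \<noteq> {}"
  shows "last t \<in> C" and "pos t (last t) = card C"
proof -
  have "t \<noteq> []"
    using assms by (auto simp: rankings_def)
  then show "last t \<in> C"
    using assms(1) by (auto simp: rankings_def)
  have "0 < length t"
    using \<open>t \<noteq> []\<close> by simp
  then show "pos t (last t) = card C"
    using pos_nth[OF assms(1), of "length t - 1"] \<open>t \<noteq> []\<close> length_ranking[OF assms(1)]
    by (simp add: last_conv_nth)
qed

lemma bij_betw_transpose: "x \<in> C \<Longrightarrow> y \<in> C \<Longrightarrow> bij_betw (Transposition.transpose x y) C C"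
  by (simp add: bij_betw_def inj_on_def transpose_eq_iff) blast

lemma
  assumes "t \<in> rankings C" "x \<in> C" "y \<in> C"
  shows transpose_ranking: "map (Transposition.transpose x y) t \<in> rankings C"
    and pos_map_transpose: "v \<in> C \<Longrightarrow>
      pos (map (Transposition.transpose x y) t) v = pos t (Transposition.transpose x y v)"
proof -
  show "map (Transposition.transpose x y) t \<in> rankings C"
    using ranking_map_bij[OF assms(1) bij_betw_transpose[OF assms(2,3)]] .
  assume "v \<in> C"
  then have "Transposition.transpose x y v \<in> C"
    using assms(2,3) by (auto simp: Transposition.transpose_def)
  from pos_map_bij[OF assms(1) bij_betw_transpose[OF assms(2,3)] this]
  show "pos (map (Transposition.transpose x y) t) v = pos t (Transposition.transpose x y v)"
    by simp
qed

definition pushforward :: "'j set \<Rightarrow> ('j \<Rightarrow> real) \<Rightarrow> ('j \<Rightarrow> 'a) \<Rightarrow> 'a \<Rightarrow> real"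
  where "pushforward J \<omega> f t = sum \<omega> {j \<in> J. f j = t}"

lemma sum_pushforward:
  assumes "finite J" "finite T" "f ` J \<subseteq> T"
  shows "(\<Sum>t\<in>T. pushforward J \<omega> f t * F t) = (\<Sum>j\<in>J. \<omega> j * F (f j))"
proof -
  have "(\<Sum>t\<in>T. pushforward J \<omega> f t * F t) = (\<Sum>t\<in>T. \<Sum>j\<in>{j \<in> J. f j = t}. \<omega> j * F (f j))"
    by (simp add: pushforward_def sum_distrib_right)
  also have "\<dots> = (\<Sum>j\<in>J. \<omega> j * F (f j))"
    using assms by (rule sum.group)
  finally show ?thesis .
qed

lemma sum_product_bilinear:
  fixes f h :: "'i \<Rightarrow> real" and g k :: "'v \<Rightarrow> real"
  shows "(\<Sum>(i, v)\<in>A \<times> B. f i * g v + h i * k v) = sum f A * sum g B + sum h A * sum k B"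
proof -
  have "(\<Sum>(i, v)\<in>A \<times> B. f i * g v + h i * k v) = (\<Sum>i\<in>A. \<Sum>v\<in>B. f i * g v + h i * k v)"
    by (rule sum.cartesian_product[symmetric])
  also have "\<dots> = sum f A * sum g B + sum h A * sum k B"
    by (simp add: sum.distrib sum_product)
  finally show ?thesis .
qed

lemma sum_scaleR_over_fibres:
  fixes f :: "'b \<Rightarrow> 'v::real_vector"
  assumes "finite I"
  shows "(\<Sum>i\<in>I. (\<mu> (g i) / card {j\<in>I. g j = g i}) *\<^sub>R f (g i)) = (\<Sum>x\<in>g ` I. \<mu> x *\<^sub>R f x)"
proof -
  have "(\<Sum>i\<in>I. (\<mu> (g i) / card {j\<in>I. g j = g i}) *\<^sub>R f (g i))
      = (\<Sum>x\<in>g ` I. \<Sum>i\<in>{j\<in>I. g j = x}. (\<mu> x / card {j\<in>I. g j = x}) *\<^sub>R f x)"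
    by (subst sum.image_gen[OF assms]) (auto intro!: sum.cong)
  also have "\<dots> = (\<Sum>x\<in>g ` I. \<mu> x *\<^sub>R f x)"
  proof (rule sum.cong[OF refl])
    fix x assume "x \<in> g ` I"
    then have "card {j\<in>I. g j = x} \<noteq> 0"
      using assms by auto
    then have "real (card {j\<in>I. g j = x}) * (\<mu> x / card {j\<in>I. g j = x}) = \<mu> x"
      by simp
    then show "(\<Sum>i\<in>{j\<in>I. g j = x}. (\<mu> x / card {j\<in>I. g j = x}) *\<^sub>R f x) = \<mu> x *\<^sub>R f x"
      by (simp only: sum_constant_scaleR scaleR_scaleR of_nat_id)
  qed
  finally show ?thesis .
qed

section \<open>Covering programs and their duals\<close>

definition covering_feasible :: "'i set \<Rightarrow> ('i \<Rightarrow> 'v::euclidean_space) \<Rightarrow> 'v \<Rightarrow> ('i \<Rightarrow> real) \<Rightarrow> bool"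
  where "covering_feasible I p c z \<longleftrightarrow>
    (\<forall>i\<in>I. 0 \<le> z i) \<and> (\<forall>k\<in>Basis. c \<bullet> k \<le> (\<Sum>i\<in>I. z i *\<^sub>R p i) \<bullet> k)"

definition packing_feasible :: "'i set \<Rightarrow> ('i \<Rightarrow> 'v::euclidean_space) \<Rightarrow> 'v \<Rightarrow> bool"
  where "packing_feasible I p y \<longleftrightarrow> (\<forall>k\<in>Basis. 0 \<le> y \<bullet> k) \<and> (\<forall>i\<in>I. p i \<bullet> y \<le> 1)"

lemma covering_weak_duality:
  assumes "covering_feasible I p c z" "packing_feasible I p y"
  shows "c \<bullet> y \<le> sum z I"
proof -
  have "c \<bullet> y = (\<Sum>k\<in>Basis. (c \<bullet> k) * (y \<bullet> k))"
    by (rule euclidean_inner)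
  also have "\<dots> \<le> (\<Sum>k\<in>Basis. ((\<Sum>i\<in>I. z i *\<^sub>R p i) \<bullet> k) * (y \<bullet> k))"
    using assms by (intro sum_mono mult_right_mono)
      (auto simp: covering_feasible_def packing_feasible_def)
  also have "\<dots> = (\<Sum>i\<in>I. z i *\<^sub>R p i) \<bullet> y"
    by (rule euclidean_inner[symmetric])
  also have "\<dots> = (\<Sum>i\<in>I. z i * (p i \<bullet> y))"
    by (simp add: inner_sum_left)
  also have "\<dots> \<le> sum z I"
    using assms by (intro sum_mono mult_left_le)
      (auto simp: covering_feasible_def packing_feasible_def)
  finally show ?thesis .
qed

lemma covering_feasible_of_hull:
  fixes p :: "'i \<Rightarrow> 'v::euclidean_space"
  assumes "finite I" "0 < s" "h \<in> convex hull (p ` I)" "\<And>k. k \<in> Basis \<Longrightarrow> (c /\<^sub>R s - h) \<bullet> k \<le> 0"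
  shows "\<exists>z. covering_feasible I p c z \<and> sum z I = s"
proof -
  obtain \<mu> where \<mu>: "\<forall>x\<in>p ` I. 0 \<le> \<mu> x" "sum \<mu> (p ` I) = 1" "(\<Sum>x\<in>p ` I. \<mu> x *\<^sub>R x) = h"
    using assms(1,3) by (auto simp: convex_hull_finite)
  define z where "z i = s * (\<mu> (p i) / card {j\<in>I. p j = p i})" for i
  have "(\<Sum>i\<in>I. z i *\<^sub>R p i) = s *\<^sub>R (\<Sum>i\<in>I. (\<mu> (p i) / card {j\<in>I. p j = p i}) *\<^sub>R p i)"
    unfolding z_def scaleR_sum_right scaleR_scaleR ..
  also have "\<dots> = s *\<^sub>R h"
    using sum_scaleR_over_fibres[OF assms(1), of \<mu> p id] \<mu>(3) by simp
  finally have zp: "(\<Sum>i\<in>I. z i *\<^sub>R p i) = s *\<^sub>R h" .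
  have "sum z I = s * (\<Sum>i\<in>I. (\<mu> (p i) / card {j\<in>I. p j = p i}) *\<^sub>R (1::real))"
    unfolding z_def sum_distrib_left by simp
  also have "\<dots> = s"
    using sum_scaleR_over_fibres[OF assms(1), of \<mu> p "\<lambda>_. 1::real"] \<mu>(2) by simp
  finally have "sum z I = s" .
  moreover have "0 \<le> z i" if "i \<in> I" for i
    using \<mu>(1) assms(2) that unfolding z_def by (intro mult_nonneg_nonneg divide_nonneg_nonneg) auto
  moreover have "c \<bullet> k \<le> (s *\<^sub>R h) \<bullet> k" if "k \<in> Basis" for k
  proof -
    have "c = s *\<^sub>R (c /\<^sub>R s - h) + s *\<^sub>R h"
      using assms(2) by (simp add: scaleR_diff_right)
    then have "c \<bullet> k = s * ((c /\<^sub>R s - h) \<bullet> k) + (s *\<^sub>R h) \<bullet> k"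
      by (metis inner_add_left inner_scaleR_left)
    moreover have "s * ((c /\<^sub>R s - h) \<bullet> k) \<le> 0"
      using assms(2,4) that by (simp add: mult_nonneg_nonpos)
    ultimately show ?thesis
      by linarith
  qed
  ultimately have "covering_feasible I p c z"
    using zp by (simp add: covering_feasible_def)
  with \<open>sum z I = s\<close> show ?thesis
    by blast
qed

lemma orthant_separation_signs:
  fixes \<alpha> :: "'v::euclidean_space"
  assumes "\<And>x. \<forall>k\<in>Basis. k \<bullet> x \<le> 0 \<Longrightarrow> \<beta> < \<alpha> \<bullet> x"
  shows "\<beta> < 0" and "\<And>k. k \<in> Basis \<Longrightarrow> \<alpha> \<bullet> k \<le> 0"
proof -
  show \<beta>: "\<beta> < 0"
    using assms[of 0] by simp
  show "\<alpha> \<bullet> k \<le> 0" if k: "k \<in> Basis" for k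
  proof (rule ccontr)
    assume pos: "\<not> \<alpha> \<bullet> k \<le> 0"
    define t where "t = - \<beta> / (\<alpha> \<bullet> k)"
    have "0 \<le> t"
      using pos \<beta> by (simp add: t_def divide_nonpos_pos)
    then have "\<forall>k'\<in>Basis. k' \<bullet> (- t *\<^sub>R k) \<le> 0"
      using k by (simp add: inner_Basis)
    then have "\<beta> < \<alpha> \<bullet> (- t *\<^sub>R k)"
      by (rule assms)
    moreover have "\<alpha> \<bullet> (- t *\<^sub>R k) = \<beta>"
      using pos by (simp add: t_def)
    ultimately show False
      by simp
  qed
qed

lemma packing_of_separating_hyperplane:
  fixes c \<alpha> :: "'v::euclidean_space" and p :: "'i \<Rightarrow> 'v"
  assumes s: "0 < s" and sep_c: "\<alpha> \<bullet> (c /\<^sub>R s) < \<beta>"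
    and sep_orthant: "\<And>x. \<forall>k\<in>Basis. k \<bullet> x \<le> 0 \<Longrightarrow> \<beta> < \<alpha> \<bullet> x"
    and sep_columns: "\<And>i. i \<in> I \<Longrightarrow> \<beta> < \<alpha> \<bullet> p i"
  shows "\<exists>y. packing_feasible I p y \<and> s < c \<bullet> y"
proof -
  have \<beta>: "\<beta> < 0"
    by (rule orthant_separation_signs(1)) (rule sep_orthant)
  have \<alpha>: "\<alpha> \<bullet> k \<le> 0" if "k \<in> Basis" for k
    by (rule orthant_separation_signs(2)[OF _ that]) (rule sep_orthant)
  define y where "y = \<alpha> /\<^sub>R \<beta>"
  have "packing_feasible I p y"
    unfolding packing_feasible_def
  proof (intro conjI ballI)
    fix k :: 'v assume "k \<in> Basis"
    then have "\<alpha> \<bullet> k \<le> 0"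
      by (rule \<alpha>)
    moreover have "inverse \<beta> \<le> 0"
      using \<beta> by simp
    ultimately show "0 \<le> y \<bullet> k"
      by (simp add: y_def mult_nonpos_nonpos)
  next
    fix i assume "i \<in> I"
    then have "(\<alpha> \<bullet> p i) / \<beta> < 1"
      using sep_columns \<beta> by (simp add: divide_less_eq_1_neg)
    moreover have "p i \<bullet> y = (\<alpha> \<bullet> p i) / \<beta>"
      by (simp add: y_def inner_commute divide_inverse_commute)
    ultimately show "p i \<bullet> y \<le> 1"
      by simp
  qed
  moreover have "s < c \<bullet> y"
  proof -
    have "\<alpha> \<bullet> c / s < \<beta>"
      using sep_c by (simp add: divide_inverse_commute)
    then have "\<alpha> \<bullet> c < s * \<beta>"
      using s by (simp add: divide_less_eq mult.commute)
    then have "s < (\<alpha> \<bullet> c) / \<beta>"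
      using \<beta> by (simp add: neg_less_divide_eq mult.commute)
    then show ?thesis
      by (simp add: y_def inner_commute divide_inverse_commute)
  qed
  ultimately show ?thesis
    by blast
qed

lemma closed_convex_hull_plus_orthant:
  fixes P :: "'v::euclidean_space set"
  assumes "finite P"
  defines "D \<equiv> \<Union>h\<in>convex hull P. \<Union>n\<in>(\<Inter>k\<in>Basis. {x. k \<bullet> x \<le> 0}). {h + n}"
  shows "closed D" and "convex D"
proof -
  have "compact (convex hull P)"
    using assms(1) by (rule finite_imp_compact_convex_hull)
  moreover have "closed (\<Inter>k\<in>Basis. {x::'v. k \<bullet> x \<le> 0})"
    by (intro closed_INT ballI closed_halfspace_le)
  ultimately show "closed D"
    unfolding D_def by (rule compact_closed_sums)
  show "convex D"
    unfolding D_def by (intro convex_sums convex_convex_hull convex_INT ballI convex_halfspace_le)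
qed

lemma covering_strong_duality:
  fixes p :: "'i \<Rightarrow> 'v::euclidean_space"
  assumes I: "finite I" "I \<noteq> {}" and p_nonneg: "\<And>i k. i \<in> I \<Longrightarrow> k \<in> Basis \<Longrightarrow> 0 \<le> p i \<bullet> k"
    and s: "0 < s" and gt: "\<And>z. covering_feasible I p c z \<Longrightarrow> s < sum z I"
  shows "\<exists>y. packing_feasible I p y \<and> s < c \<bullet> y"
proof -
  define H where "H = convex hull (p ` I)"
  define K where "K = (\<Inter>k\<in>Basis. {x::'v. k \<bullet> x \<le> 0})"
  define D where "D = (\<Union>h\<in>H. \<Union>n\<in>K. {h + n})"
  have "c /\<^sub>R s \<notin> D"
  proof
    assume "c /\<^sub>R s \<in> D"
    then obtain h n where h: "h \<in> H" and n: "n \<in> K" and cs: "c /\<^sub>R s = h + n"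
      unfolding D_def by blast
    have "(c /\<^sub>R s - h) \<bullet> k \<le> 0" if "k \<in> Basis" for k
      using n that by (simp add: cs K_def inner_commute)
    then obtain z where "covering_feasible I p c z" "sum z I = s"
      using covering_feasible_of_hull[OF I(1) s h[unfolded H_def]] by blast
    with gt show False
      by force
  qed
  moreover have "closed D" "convex D"
    using closed_convex_hull_plus_orthant[of "p ` I"] I(1) by (simp_all add: D_def H_def K_def)
  ultimately obtain \<alpha> \<beta> where sep: "\<alpha> \<bullet> (c /\<^sub>R s) < \<beta>" "\<forall>x\<in>D. \<beta> < \<alpha> \<bullet> x"
    using separating_hyperplane_closed_point by blast
  obtain i0 where "i0 \<in> I"
    using I(2) by blast
  show ?thesis
  proof (rule packing_of_separating_hyperplane[OF s sep(1)])
    fix n :: 'v assume n: "\<forall>k\<in>Basis. k \<bullet> n \<le> 0"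
    have "k \<bullet> (n - p i0) \<le> 0" if "k \<in> Basis" for k
    proof -
      have "k \<bullet> n \<le> 0" "0 \<le> k \<bullet> p i0"
        using n that p_nonneg[OF \<open>i0 \<in> I\<close> that] by (simp_all add: inner_commute)
      then show ?thesis
        by (simp add: inner_diff_right)
    qed
    then have "n - p i0 \<in> K"
      by (simp add: K_def)
    moreover have "p i0 \<in> H"
      using \<open>i0 \<in> I\<close> by (simp add: H_def hull_inc)
    ultimately have "p i0 + (n - p i0) \<in> D"
      unfolding D_def by blast
    then show "\<beta> < \<alpha> \<bullet> n"
      using sep(2) by simp
  next
    fix i assume "i \<in> I"
    then have "p i \<in> H"
      by (simp add: H_def hull_inc)
    moreover have "0 \<in> K"
      by (simp add: K_def)
    ultimately have "p i + 0 \<in> D"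
      unfolding D_def by blast
    then show "\<beta> < \<alpha> \<bullet> p i"
      using sep(2) by simp
  qed
qed

lemma Inf_eq_Sup_ereal_by_duality:
  fixes P D :: "real set"
  assumes weak: "\<And>x y. x \<in> P \<Longrightarrow> y \<in> D \<Longrightarrow> y \<le> x" and "0 \<in> D"
    and strong: "\<And>s. 0 < s \<Longrightarrow> (\<And>x. x \<in> P \<Longrightarrow> s < x) \<Longrightarrow> \<exists>y\<in>D. s < y"
  shows "Inf (ereal ` P) = Sup (ereal ` D)"
proof (rule antisym)
  show "Sup (ereal ` D) \<le> Inf (ereal ` P)"
  proof (rule Sup_least)
    fix d assume "d \<in> ereal ` D"
    then obtain y where "y \<in> D" "d = ereal y"
      by blast
    then show "d \<le> Inf (ereal ` P)"
      using weak by (force intro: Inf_greatest)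
  qed
  show "Inf (ereal ` P) \<le> Sup (ereal ` D)"
  proof (rule ccontr)
    assume "\<not> ?thesis"
    then have "Sup (ereal ` D) < Inf (ereal ` P)"
      by simp
    then obtain s where s: "Sup (ereal ` D) < ereal s" "ereal s < Inf (ereal ` P)"
      using ereal_dense2 by blast
    have "ereal 0 \<le> Sup (ereal ` D)"
      using \<open>0 \<in> D\<close> by (simp add: Sup_upper)
    then have "ereal 0 < ereal s"
      using s(1) by (rule le_less_trans)
    then have "0 < s"
      by simp
    moreover have "s < x" if "x \<in> P" for x
    proof -
      have "Inf (ereal ` P) \<le> ereal x"
        using that by (simp add: Inf_lower)
      with s(2) have "ereal s < ereal x"
        by (rule less_le_trans)
      then show ?thesis
        by simp
    qed
    ultimately obtain y where "y \<in> D" "s < y"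
      using strong by blast
    then have "ereal s < ereal y"
      by simp
    also have "\<dots> \<le> Sup (ereal ` D)"
      using \<open>y \<in> D\<close> by (simp add: Sup_upper)
    finally have "ereal s < Sup (ereal ` D)" .
    with s(1) show False
      by simp
  qed
qed

theorem covering_lp_duality:
  fixes p :: "'i \<Rightarrow> 'v::euclidean_space"
  assumes "finite I" "I \<noteq> {}" "\<And>i k. i \<in> I \<Longrightarrow> k \<in> Basis \<Longrightarrow> 0 \<le> p i \<bullet> k"
  shows "Inf {ereal (sum z I) | z. covering_feasible I p c z}
       = Sup {ereal (c \<bullet> y) | y. packing_feasible I p y}"
proof -
  define P where "P = {sum z I | z. covering_feasible I p c z}"
  define D where "D = {c \<bullet> y | y. packing_feasible I p y}"
  have "Inf (ereal ` P) = Sup (ereal ` D)"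
  proof (rule Inf_eq_Sup_ereal_by_duality)
    have "packing_feasible I p 0"
      by (simp add: packing_feasible_def)
    then show "0 \<in> D"
      unfolding D_def by force
    show "d \<le> x" if "x \<in> P" "d \<in> D" for x d
    proof -
      obtain z where "covering_feasible I p c z" "x = sum z I"
        using \<open>x \<in> P\<close> by (auto simp: P_def)
      moreover obtain y where "packing_feasible I p y" "d = c \<bullet> y"
        using \<open>d \<in> D\<close> by (auto simp: D_def)
      ultimately show ?thesis
        by (simp add: covering_weak_duality)
    qed
    show "\<exists>d\<in>D. s < d" if "0 < s" "\<And>x. x \<in> P \<Longrightarrow> s < x" for s
    proof -
      have "s < sum z I" if "covering_feasible I p c z" for z
        using that \<open>\<And>x. x \<in> P \<Longrightarrow> s < x\<close> by (auto simp: P_def)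
      then obtain y where "packing_feasible I p y" "s < c \<bullet> y"
        using covering_strong_duality[where I = I and p = p, OF assms \<open>0 < s\<close>] by blast
      then show ?thesis
        unfolding D_def by blast
    qed
  qed
  moreover have "{ereal (sum z I) | z. covering_feasible I p c z} = ereal ` P"
    unfolding P_def by blast
  moreover have "{ereal (c \<bullet> y) | y. packing_feasible I p y} = ereal ` D"
    unfolding D_def by blast
  ultimately show ?thesis
    by simp
qed

theorem packing_unbounded_iff_covering_infeasible:
  fixes p :: "'i \<Rightarrow> 'v::euclidean_space"
  assumes "finite I" "I \<noteq> {}" "\<And>i k. i \<in> I \<Longrightarrow> k \<in> Basis \<Longrightarrow> 0 \<le> p i \<bullet> k"
  shows "(\<forall>B. \<exists>y. packing_feasible I p y \<and> B < c \<bullet> y) \<longleftrightarrow> \<not> (\<exists>z. covering_feasible I p c z)"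
proof
  assume unbounded: "\<forall>B. \<exists>y. packing_feasible I p y \<and> B < c \<bullet> y"
  show "\<not> (\<exists>z. covering_feasible I p c z)"
  proof
    assume "\<exists>z. covering_feasible I p c z"
    then obtain z where z: "covering_feasible I p c z"
      by blast
    obtain y where "packing_feasible I p y" "sum z I < c \<bullet> y"
      using unbounded by blast
    with covering_weak_duality[OF z] show False
      by (simp add: not_le[symmetric])
  qed
next
  assume infeasible: "\<not> (\<exists>z. covering_feasible I p c z)"
  show "\<forall>B. \<exists>y. packing_feasible I p y \<and> B < c \<bullet> y"
  proof
    fix B :: real
    obtain y where "packing_feasible I p y" "max 1 B < c \<bullet> y"
      using covering_strong_duality[where I = I and p = p, OF assms, of "max 1 B"] infeasible by force
    then show "\<exists>y. packing_feasible I p y \<and> B < c \<bullet> y"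
      by (intro exI[of _ y]) simp
  qed
qed

section \<open>Off-diagonal couplings\<close>

definition offdiagonal_coupling :: "'a set \<Rightarrow> ('a \<Rightarrow> real) \<Rightarrow> 'a \<Rightarrow> 'a \<Rightarrow> real"
  where "offdiagonal_coupling A q u l = (if u = l then 0 else q l / (real (card A) - 1))"

lemma
  assumes "finite A" "2 \<le> card A" "x \<in> A"
  shows offdiagonal_coupling_col: "(\<Sum>u\<in>A. offdiagonal_coupling A q u x) = q x"
    and offdiagonal_coupling_row:
      "(\<Sum>l\<in>A. offdiagonal_coupling A q x l) = (sum q A - q x) / (real (card A) - 1)"
proof -
  have card: "real (card (A - {x})) = real (card A) - 1" "real (card A) - 1 \<noteq> 0"
    using assms by (simp_all add: of_nat_diff)
  have "(\<Sum>u\<in>A. offdiagonal_coupling A q u x) = (\<Sum>u\<in>A - {x}. q x / (real (card A) - 1))"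
    using assms(1) by (simp add: offdiagonal_coupling_def sum.If_cases Diff_eq Int_commute)
  then show "(\<Sum>u\<in>A. offdiagonal_coupling A q u x) = q x"
    using card by simp
  have "(\<Sum>l\<in>A. offdiagonal_coupling A q x l) = (\<Sum>l\<in>A - {x}. q l / (real (card A) - 1))"
    using assms(1) by (simp add: offdiagonal_coupling_def sum.If_cases Diff_eq Int_commute)
  then show "(\<Sum>l\<in>A. offdiagonal_coupling A q x l) = (sum q A - q x) / (real (card A) - 1)"
    using assms(1,3) by (simp add: sum_divide_distrib[symmetric] sum_diff1)
qed

lemma offdiagonal_coupling_bound:
  assumes A: "finite A" "2 \<le> card A" "x \<in> A" and "sum q A = 1"
    and "q x * (R + S / (real (card A) - 1)) \<le> S + S / (real (card A) - 1) + g x"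
  shows "R * (\<Sum>u\<in>A. offdiagonal_coupling A q u x)
    \<le> S * (1 + (\<Sum>l\<in>A. offdiagonal_coupling A q x l)) + g x"
proof -
  have "S * (1 + (1 - q x) / (real (card A) - 1)) + g x
      = S + S / (real (card A) - 1) + g x - q x * (S / (real (card A) - 1))"
    by (simp add: diff_divide_distrib algebra_simps)
  then show ?thesis
    using assms offdiagonal_coupling_col[OF A] offdiagonal_coupling_row[OF A]
    by (simp add: algebra_simps)
qed

lemma exists_offdiagonal_weights:
  fixes S R :: real
  assumes A: "finite A" "2 \<le> card A" and S: "0 \<le> S" and g: "\<And>x. x \<in> A \<Longrightarrow> 0 \<le> g x"
    and pos: "0 < S + sum g A" and R: "R \<le> (card A + 1) * S + sum g A"
  shows "\<exists>q. (\<forall>x\<in>A. 0 \<le> q x) \<and> sum q A = 1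
    \<and> (\<forall>x\<in>A. q x * (R + S / (real (card A) - 1)) \<le> S + S / (real (card A) - 1) + g x)"
proof -
  define k where "k = real (card A)"
  have k: "1 < k"
    using A(2) by (simp add: k_def)
  define c where "c x = S + S / (k - 1) + g x" for x
  have "k * (S / (k - 1)) = S + S / (k - 1)"
    using k by (simp add: field_simps)
  then have sum_c: "sum c A = (k + 1) * S + sum g A + S / (k - 1)"
    by (simp add: c_def sum.distrib k_def algebra_simps)
  moreover have "0 \<le> k * S" "0 \<le> S / (k - 1)"
    using S k by simp_all
  ultimately have "0 < sum c A"
    using pos by (simp add: algebra_simps)
  have "R + S / (k - 1) \<le> sum c A"
    using R sum_c by (simp add: k_def add.commute)
  define q where "q x = c x / sum c A" for x
  have q_nonneg: "0 \<le> q x" if "x \<in> A" for x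
    using S g[OF that] k \<open>0 < sum c A\<close> by (simp add: q_def c_def)
  moreover have "sum q A = 1"
    using \<open>0 < sum c A\<close> by (simp add: q_def sum_divide_distrib[symmetric])
  moreover have "q x * (R + S / (k - 1)) \<le> c x" if "x \<in> A" for x
  proof -
    have "q x * (R + S / (k - 1)) \<le> q x * sum c A"
      using \<open>R + S / (k - 1) \<le> sum c A\<close> q_nonneg[OF that] by (rule mult_left_mono)
    also have "\<dots> = c x"
      using \<open>0 < sum c A\<close> by (simp add: q_def)
    finally show ?thesis .
  qed
  ultimately show ?thesis
    by (auto simp: c_def k_def)
qed

text \<open>In the transfer plan below, the row sums of \<pi> count how often x is the top candidate pushed
  below b and the column sums how often x is the bottom candidate lifted to the place of a; the
  inequality then says that x stays behind b.\<close>

lemma exists_coupling: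
  fixes S R :: real and g :: "'a \<Rightarrow> real"
  assumes A: "finite A" "A \<noteq> {}" and S: "0 \<le> S" and g: "\<And>x. x \<in> A \<Longrightarrow> 0 \<le> g x"
    and pos: "0 < S + sum g A" and R: "R \<le> (card A + 1) * S + sum g A"
  shows "\<exists>\<pi>. (\<forall>u\<in>A. \<forall>l\<in>A. 0 \<le> \<pi> u l) \<and> (\<Sum>u\<in>A. \<Sum>l\<in>A. \<pi> u l) = 1
     \<and> (2 \<le> card A \<longrightarrow> (\<forall>u. \<pi> u u = 0))
     \<and> (\<forall>x\<in>A. R * (\<Sum>u\<in>A. \<pi> u x) \<le> S * (1 + (\<Sum>l\<in>A. \<pi> x l)) + g x)"
proof (cases "card A = 1")
  case True
  then obtain x0 where "A = {x0}"
    by (rule card_1_singletonE)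
  with R show ?thesis
    by (intro exI[of _ "\<lambda>_ _. 1"]) simp
next
  case False
  moreover have "0 < card A"
    using A card_gt_0_iff by blast
  ultimately have card: "2 \<le> card A"
    by linarith
  then obtain q where q: "\<forall>x\<in>A. 0 \<le> q x" "sum q A = 1"
    "\<forall>x\<in>A. q x * (R + S / (real (card A) - 1)) \<le> S + S / (real (card A) - 1) + g x"
    using exists_offdiagonal_weights[OF A(1) card S g pos R] by blast
  show ?thesis
  proof (intro exI[of _ "offdiagonal_coupling A q"] conjI ballI allI impI)
    show "0 \<le> offdiagonal_coupling A q u l" if "u \<in> A" "l \<in> A" for u l
      using q(1) card that by (simp add: offdiagonal_coupling_def)
    show "(\<Sum>u\<in>A. \<Sum>l\<in>A. offdiagonal_coupling A q u l) = 1"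
      using offdiagonal_coupling_col[OF A(1) card] q(2) by (simp add: sum.swap[of _ A A])
    show "offdiagonal_coupling A q u u = 0" for u
      by (simp add: offdiagonal_coupling_def)
    show "R * (\<Sum>u\<in>A. offdiagonal_coupling A q u x)
        \<le> S * (1 + (\<Sum>l\<in>A. offdiagonal_coupling A q x l)) + g x" if "x \<in> A" for x
      using offdiagonal_coupling_bound[OF A(1) card that q(2)] q(3) that by blast
  qed
qed

section \<open>Positional scoring and the reduction of (P2) to (P4)\<close>

locale positional_scoring =
  fixes C :: "'c set" and m :: nat and w :: "nat \<Rightarrow> real"
  assumes card_C: "card C = m" and two_le_m: "2 \<le> m"
    and w_first: "w 1 = 1" and w_last: "w m = 0"
    and w_antimono: "\<And>i j. 1 \<le> i \<Longrightarrow> i \<le> j \<Longrightarrow> j \<le> m \<Longrightarrow> w j \<le> w i"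
begin

lemma finite_C: "finite C"
  using card_C two_le_m card.infinite by force

lemma C_nonempty: "C \<noteq> {}"
  using card_C two_le_m by auto

lemma w_nonneg: "1 \<le> k \<Longrightarrow> k \<le> m \<Longrightarrow> 0 \<le> w k"
  using w_antimono[of k m] w_last by simp

lemma w_le_1: "1 \<le> k \<Longrightarrow> k \<le> m \<Longrightarrow> w k \<le> 1"
  using w_antimono[of 1 k] w_first by simp

lemma pos_bounds: "t \<in> rankings C \<Longrightarrow> x \<in> C \<Longrightarrow> 1 \<le> pos t x \<and> pos t x \<le> m"
  using bij_betw_pos[of t C] card_C by (auto simp: bij_betw_def)

lemma sigma_nonneg: "t \<in> rankings C \<Longrightarrow> x \<in> C \<Longrightarrow> 0 \<le> sigma w t x"
  using pos_bounds w_nonneg by (simp add: sigma_def)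

lemma sum_sigma: "t \<in> rankings C \<Longrightarrow> (\<Sum>x\<in>C. sigma w t x) = m * wbar w m"
  using sum_pos_ranking[of t C w] card_C two_le_m by (simp add: sigma_def wbar_def)

lemma sum_score: "(\<Sum>x\<in>C. score C w N x) = real (total C N) * (m * wbar w m)"
proof -
  have "(\<Sum>x\<in>C. score C w N x) = (\<Sum>t\<in>rankings C. real (N t) * (\<Sum>x\<in>C. sigma w t x))"
    by (simp add: score_def sum.swap[of _ C] sum_distrib_left)
  also have "\<dots> = (\<Sum>t\<in>rankings C. real (N t) * (m * wbar w m))"
    by (simp add: sum_sigma)
  finally show ?thesis
    by (simp add: total_def sum_distrib_right)
qed

end

locale runner_up = positional_scoring C m w for C :: "'c set" and m w +
  fixes N :: "'c list \<Rightarrow> nat" and a b :: 'c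
  assumes three_le_m: "3 \<le> m" and a_in: "a \<in> C" and b_in: "b \<in> C" and b_ne_a: "b \<noteq> a"
    and a_wins: "\<And>\<alpha>. \<alpha> \<in> C \<Longrightarrow> \<alpha> \<noteq> a \<Longrightarrow> score C w N \<alpha> < score C w N a"
    and b_second: "\<And>\<alpha>. \<alpha> \<in> C \<Longrightarrow> \<alpha> \<noteq> a \<Longrightarrow> score C w N \<alpha> \<le> score C w N b"
begin

abbreviation "sc \<equiv> score C w N"
abbreviation "voters \<equiv> real (total C N)"

definition margin :: "'c list \<Rightarrow> 'c \<Rightarrow> real"
  where "margin t \<alpha> = sigma w t b - sigma w t \<alpha>"

definition b_gain :: "(nat \<Rightarrow> real) \<Rightarrow> real"
  where "b_gain z = (\<Sum>i=1..m-1. (1 - w i) * z i)"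

definition a_loss :: "(nat \<Rightarrow> real) \<Rightarrow> real"
  where "a_loss z = (\<Sum>i=1..m-1. w (i + 1) * z i)"

lemma Tb_subset: "Tb C b \<subseteq> rankings C"
  by (auto simp: Tb_def)

lemma Tba_subset: "Tba C m a b \<subseteq> rankings C"
  by (auto simp: Tba_def)

lemma finite_Tb: "finite (Tb C b)"
  using Tb_subset finite_rankings[OF finite_C] finite_subset by blast

lemma finite_Tba: "finite (Tba C m a b)"
  using Tba_subset finite_rankings[OF finite_C] finite_subset by blast

lemma sigma_b_Tb: "t \<in> Tb C b \<Longrightarrow> sigma w t b = 1"
  using w_first by (simp add: Tb_def sigma_def)

lemma pos_Tba: "t \<in> Tba C m a b \<Longrightarrow> pos t b \<in> {1..m-1} \<and> pos t a = pos t b + 1"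
  by (auto simp: Tba_def)

lemma feas2_iff_margin:
  "feas2 C m w N a b x y \<longleftrightarrow>
     (\<forall>\<alpha>\<in>C. \<alpha> \<noteq> b \<longrightarrow> sc \<alpha> - sc b
        \<le> (\<Sum>t\<in>Tb C b. y t * margin t \<alpha>) - (\<Sum>t\<in>Tba C m a b. x t * margin t \<alpha>))
     \<and> sum y (Tb C b) = sum x (Tba C m a b)
     \<and> (\<forall>t\<in>Tba C m a b. 0 \<le> x t) \<and> (\<forall>t\<in>Tb C b. 0 \<le> y t)"
proof -
  have "(\<Sum>t\<in>Tb C b. y t * (1 - sigma w t \<alpha>)) = (\<Sum>t\<in>Tb C b. y t * margin t \<alpha>)" for \<alpha>
    by (rule sum.cong) (simp_all add: margin_def sigma_b_Tb)
  then show ?thesis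
    by (simp add: feas2_def margin_def)
qed

lemma sum_margin:
  assumes "t \<in> rankings C"
  shows "(\<Sum>\<alpha>\<in>C - {b}. margin t \<alpha>) = m * (sigma w t b - wbar w m)"
proof -
  have "(\<Sum>\<alpha>\<in>C - {b}. margin t \<alpha>) = (\<Sum>\<alpha>\<in>C. margin t \<alpha>)"
    using finite_C b_in by (simp add: sum_diff1 margin_def)
  also have "\<dots> = m * (sigma w t b - wbar w m)"
    using sum_sigma[OF assms] card_C by (simp add: margin_def sum_subtractf algebra_simps)
  finally show ?thesis .
qed

lemma feas4_iff:
  "feas4 C m w N a b z \<longleftrightarrow> sc a - sc b \<le> b_gain z + a_loss z
     \<and> voters * wbar w m - sc b \<le> b_gain z \<and> (\<forall>i\<in>{1..m-1}. 0 \<le> z i)"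
proof -
  have "(\<Sum>i=1..m-1. (1 - w i + w (i + 1)) * z i) = b_gain z + a_loss z"
    by (simp add: b_gain_def a_loss_def sum.distrib[symmetric] algebra_simps)
  then show ?thesis
    by (simp add: feas4_def b_gain_def)
qed

lemma sum_Tba_by_position:
  fixes x :: "'c list \<Rightarrow> real" and f :: "nat \<Rightarrow> real"
  shows "(\<Sum>t\<in>Tba C m a b. x t * f (pos t b))
     = (\<Sum>i=1..m-1. (\<Sum>t\<in>{t\<in>Tba C m a b. pos t b = i}. x t) * f i)"
proof -
  have "(\<Sum>t\<in>Tba C m a b. x t * f (pos t b))
      = (\<Sum>i=1..m-1. \<Sum>t\<in>{t\<in>Tba C m a b. pos t b = i}. x t * f (pos t b))"
    using finite_Tba pos_Tba by (intro sum.group[symmetric]) auto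
  also have "\<dots> = (\<Sum>i=1..m-1. \<Sum>t\<in>{t\<in>Tba C m a b. pos t b = i}. x t * f i)"
    by (intro sum.cong) auto
  finally show ?thesis
    by (simp only: sum_distrib_right)
qed

lemma sum_score_gaps: "(\<Sum>\<alpha>\<in>C - {b}. sc \<alpha> - sc b) = m * (voters * wbar w m - sc b)"
  using sum_score[of N] card_C finite_C b_in two_le_m
  by (simp add: sum_subtractf sum_diff1 of_nat_diff algebra_simps)

lemma sum_margin_balanced:
  assumes flow: "sum y (Tb C b) = sum x (Tba C m a b)"
  shows "(\<Sum>\<alpha>\<in>C - {b}. (\<Sum>t\<in>Tb C b. y t * margin t \<alpha>) - (\<Sum>t\<in>Tba C m a b. x t * margin t \<alpha>))
    = m * (\<Sum>t\<in>Tba C m a b. x t * (1 - w (pos t b)))"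
proof -
  have tb: "(\<Sum>t\<in>Tb C b. y t * (\<Sum>\<alpha>\<in>C - {b}. margin t \<alpha>)) = sum y (Tb C b) * (m * (1 - wbar w m))"
    using Tb_subset by (auto simp: sum_margin sigma_b_Tb sum_distrib_right intro!: sum.cong)
  have "(\<Sum>t\<in>Tba C m a b. x t * (\<Sum>\<alpha>\<in>C - {b}. margin t \<alpha>))
      = (\<Sum>t\<in>Tba C m a b. x t * (m * (w (pos t b) - wbar w m)))"
    using Tba_subset by (intro sum.cong refl) (auto simp: sum_margin sigma_def)
  also have "\<dots> = m * (\<Sum>t\<in>Tba C m a b. x t * w (pos t b)) - sum x (Tba C m a b) * (m * wbar w m)"
    by (simp add: right_diff_distrib sum_subtractf sum_distrib_left sum_distrib_right mult_ac)
  finally have tba: "(\<Sum>t\<in>Tba C m a b. x t * (\<Sum>\<alpha>\<in>C - {b}. margin t \<alpha>))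
      = m * (\<Sum>t\<in>Tba C m a b. x t * w (pos t b)) - sum x (Tba C m a b) * (m * wbar w m)" .
  have one_minus: "(\<Sum>t\<in>Tba C m a b. x t * (1 - w (pos t b)))
      = sum x (Tba C m a b) - (\<Sum>t\<in>Tba C m a b. x t * w (pos t b))"
    by (simp add: right_diff_distrib sum_subtractf)
  have "(\<Sum>\<alpha>\<in>C - {b}. (\<Sum>t\<in>Tb C b. y t * margin t \<alpha>) - (\<Sum>t\<in>Tba C m a b. x t * margin t \<alpha>))
      = (\<Sum>t\<in>Tb C b. y t * (\<Sum>\<alpha>\<in>C - {b}. margin t \<alpha>))
        - (\<Sum>t\<in>Tba C m a b. x t * (\<Sum>\<alpha>\<in>C - {b}. margin t \<alpha>))"
    by (simp add: sum_subtractf sum_distrib_left sum.swap[of _ "C - {b}"])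
  also have "\<dots> = m * (\<Sum>t\<in>Tba C m a b. x t * (1 - w (pos t b)))"
    unfolding tb tba one_minus flow by (simp add: algebra_simps)
  finally show ?thesis .
qed

lemma feas2_covers_a:
  assumes "feas2 C m w N a b x y"
  shows "sc a - sc b \<le> (\<Sum>t\<in>Tba C m a b. x t * (1 - w (pos t b) + w (pos t b + 1)))"
proof -
  have cons: "sc a - sc b \<le> (\<Sum>t\<in>Tb C b. y t * margin t a) - (\<Sum>t\<in>Tba C m a b. x t * margin t a)"
    and flow: "sum y (Tb C b) = sum x (Tba C m a b)" and y: "\<forall>t\<in>Tb C b. 0 \<le> y t"
    using assms a_in b_ne_a by (auto simp: feas2_iff_margin)
  have "(\<Sum>t\<in>Tb C b. y t * margin t a) \<le> sum y (Tb C b)"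
    using y Tb_subset a_in by (intro sum_mono mult_left_le)
      (auto simp: margin_def sigma_b_Tb sigma_nonneg)
  then have "sc a - sc b \<le> (\<Sum>t\<in>Tba C m a b. x t * (1 - margin t a))"
    using cons flow by (simp add: sum_subtractf algebra_simps)
  also have "\<dots> = (\<Sum>t\<in>Tba C m a b. x t * (1 - w (pos t b) + w (pos t b + 1)))"
    using pos_Tba by (intro sum.cong) (simp_all add: margin_def sigma_def)
  finally show ?thesis .
qed

lemma feas2_covers_average:
  assumes "feas2 C m w N a b x y"
  shows "voters * wbar w m - sc b \<le> (\<Sum>t\<in>Tba C m a b. x t * (1 - w (pos t b)))"
proof -
  have cons: "\<And>\<alpha>. \<alpha> \<in> C - {b} \<Longrightarrow> sc \<alpha> - sc b
        \<le> (\<Sum>t\<in>Tb C b. y t * margin t \<alpha>) - (\<Sum>t\<in>Tba C m a b. x t * margin t \<alpha>)"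
    and flow: "sum y (Tb C b) = sum x (Tba C m a b)"
    using assms by (auto simp: feas2_iff_margin)
  have "m * (voters * wbar w m - sc b)
      \<le> (\<Sum>\<alpha>\<in>C - {b}. (\<Sum>t\<in>Tb C b. y t * margin t \<alpha>) - (\<Sum>t\<in>Tba C m a b. x t * margin t \<alpha>))"
    unfolding sum_score_gaps[symmetric] using cons by (rule sum_mono)
  also have "\<dots> = m * (\<Sum>t\<in>Tba C m a b. x t * (1 - w (pos t b)))"
    using flow by (rule sum_margin_balanced)
  finally show ?thesis
    using two_le_m by simp
qed

lemma feas4_of_feas2:
  assumes "feas2 C m w N a b x y"
  shows "\<exists>z. feas4 C m w N a b z \<and> (\<Sum>i=1..m-1. z i) = (\<Sum>t\<in>Tba C m a b. x t)"
proof -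
  define z where "z i = (\<Sum>t\<in>{t\<in>Tba C m a b. pos t b = i}. x t)" for i
  have by_pos: "(\<Sum>t\<in>Tba C m a b. x t * f (pos t b)) = (\<Sum>i=1..m-1. z i * f i)" for f
    unfolding z_def by (rule sum_Tba_by_position)
  have "sc a - sc b \<le> b_gain z + a_loss z"
    using feas2_covers_a[OF assms] by_pos[of "\<lambda>i. 1 - w i + w (i + 1)"]
    by (simp add: b_gain_def a_loss_def sum.distrib[symmetric] algebra_simps)
  moreover have "voters * wbar w m - sc b \<le> b_gain z"
    using feas2_covers_average[OF assms] by_pos[of "\<lambda>i. 1 - w i"] by (simp add: b_gain_def mult.commute)
  moreover have "\<forall>i\<in>{1..m-1}. 0 \<le> z i"
    using assms by (auto simp: z_def feas2_def intro!: sum_nonneg)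
  moreover have "(\<Sum>i=1..m-1. z i) = (\<Sum>t\<in>Tba C m a b. x t)"
    using by_pos[of "\<lambda>_. 1"] by simp
  ultimately show ?thesis
    by (auto simp: feas4_iff)
qed

end

section \<open>Realising (P4) by transfers of voters\<close>

context runner_up
begin

definition b_to_top :: "'c list \<Rightarrow> 'c list"
  where "b_to_top t = map (Transposition.transpose b (hd t)) t"

definition a_to_bottom :: "'c list \<Rightarrow> 'c list"
  where "a_to_bottom t = map (Transposition.transpose a (last t)) t"

lemma
  assumes t: "t \<in> rankings C"
  shows b_to_top_ranking: "b_to_top t \<in> rankings C"
    and pos_b_to_top: "v \<in> C \<Longrightarrow> pos (b_to_top t) v = pos t (Transposition.transpose b (hd t) v)"
  using transpose_ranking pos_map_transpose b_in pos_hd(1)[OF t C_nonempty] t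
  by (simp_all add: b_to_top_def)

lemma
  assumes t: "t \<in> rankings C"
  shows a_to_bottom_ranking: "a_to_bottom t \<in> rankings C"
    and pos_a_to_bottom: "v \<in> C \<Longrightarrow> pos (a_to_bottom t) v = pos t (Transposition.transpose a (last t) v)"
  using transpose_ranking pos_map_transpose a_in pos_last(1)[OF t C_nonempty] t
  by (simp_all add: a_to_bottom_def)

lemma margin_b_to_top:
  assumes t: "t \<in> rankings C" "pos t b = i"
    and u: "u \<in> C" "u \<noteq> b" "2 \<le> i \<longrightarrow> pos t u = 1"
    and \<alpha>: "\<alpha> \<in> C" "\<alpha> \<noteq> b"
  shows "margin (b_to_top t) \<alpha> - margin t \<alpha> = (1 - w i) * (1 + of_bool (\<alpha> = u))"
proof -
  define h where "h = hd t"
  have h: "h \<in> C" "pos t h = 1"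
    using pos_hd[OF t(1) C_nonempty] by (simp_all add: h_def)
  have "1 \<le> i"
    using pos_bounds[OF t(1) b_in] t(2) by simp
  have top: "margin (b_to_top t) \<alpha> = 1 - sigma w t (Transposition.transpose b h \<alpha>)"
    using pos_b_to_top[OF t(1)] b_in \<alpha>(1) h w_first by (simp add: margin_def sigma_def h_def)
  show ?thesis
  proof (cases "\<alpha> = h")
    case True
    then have "i \<noteq> 1"
      using pos_inj[OF t(1) b_in \<alpha>(1)] h t(2) \<alpha>(2) by auto
    then have "\<alpha> = u"
      using pos_inj[OF t(1) u(1) h(1)] u(3) h(2) \<open>1 \<le> i\<close> True by simp
    with True show ?thesis
      using top t(2) h(2) w_first by (simp add: margin_def sigma_def)
  next
    case False
    \<comment> \<open>Then u is not on top, so i = 1: b is on top already and the swap is the identity.\<close>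
    have "w i = 1" if "\<alpha> = u"
    proof -
      have "\<not> 2 \<le> i"
        using pos_inj[OF t(1) u(1) h(1)] u(3) h(2) False that by auto
      then have "i = 1"
        using \<open>1 \<le> i\<close> by simp
      then show ?thesis
        using w_first by simp
    qed
    with False show ?thesis
      using top \<alpha>(2) t(2) by (auto simp: margin_def sigma_def)
  qed
qed

lemma margin_a_to_bottom:
  assumes s: "s \<in> rankings C" "pos s b = 1" "pos s a = j"
    and l: "l \<in> C" "l \<noteq> a" "j < m \<longrightarrow> pos s l = m"
    and \<alpha>: "\<alpha> \<in> C" "\<alpha> \<noteq> b"
  shows "margin (a_to_bottom s) \<alpha> - margin s \<alpha> = w j * (of_bool (\<alpha> = a) - of_bool (\<alpha> = l))"
proof -
  define L where "L = last s"
  have L: "L \<in> C" "pos s L = m"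
    using pos_last[OF s(1) C_nonempty] card_C by (simp_all add: L_def)
  have "b \<noteq> L"
    using s(2) L(2) two_le_m by auto
  then have "margin (a_to_bottom s) \<alpha> - margin s \<alpha>
      = sigma w s \<alpha> - sigma w s (Transposition.transpose a L \<alpha>)"
    using pos_a_to_bottom[OF s(1)] b_in \<alpha>(1) b_ne_a by (simp add: margin_def sigma_def L_def)
  moreover have "j \<le> m"
    using pos_bounds[OF s(1) a_in] s(3) by simp
  moreover have "L = l" if "j < m"
    using pos_inj[OF s(1) L(1) l(1)] L(2) l(3) that by simp
  \<comment> \<open>When a is already at the bottom, l may sit anywhere, but then w j = w m = 0.\<close>
  moreover have "j < m" if "L \<noteq> a"
    using pos_inj[OF s(1) L(1) a_in] L(2) s(3) \<open>j \<le> m\<close> that by fastforce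
  ultimately show ?thesis
    using s(3) L(2) l(2) w_last by (cases "\<alpha> = a"; cases "\<alpha> = L") (auto simp: sigma_def)
qed

lemma b_to_top_Tb: "t \<in> rankings C \<Longrightarrow> b_to_top t \<in> Tb C b"
  using b_to_top_ranking pos_b_to_top b_in pos_hd[OF _ C_nonempty] by (simp add: Tb_def)

lemma a_to_bottom_Tb:
  assumes "s \<in> Tb C b"
  shows "a_to_bottom s \<in> Tb C b"
proof -
  have s: "s \<in> rankings C" "pos s b = 1"
    using assms by (simp_all add: Tb_def)
  have "b \<noteq> last s"
    using pos_last[OF s(1) C_nonempty] s(2) card_C two_le_m by auto
  then show ?thesis
    using a_to_bottom_ranking[OF s(1)] pos_a_to_bottom[OF s(1) b_in] s(2) b_ne_a
    by (simp add: Tb_def)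
qed

text \<open>A type in T_i with u on top and l at the bottom, as far as these places are not taken by b
  (when i = 1) or by a (when i + 1 = m).\<close>

definition framed_by :: "'c \<Rightarrow> 'c \<Rightarrow> nat \<Rightarrow> 'c list \<Rightarrow> bool"
  where "framed_by u l i t \<longleftrightarrow> t \<in> rankings C \<and> pos t b = i \<and> pos t a = i + 1
    \<and> (2 \<le> i \<longrightarrow> pos t u = 1) \<and> (i + 1 < m \<longrightarrow> pos t l = m)"

lemma framed_by_Tba: "framed_by u l i t \<Longrightarrow> i \<in> {1..m-1} \<Longrightarrow> t \<in> Tba C m a b"
  by (auto simp: framed_by_def Tba_def)

lemma exists_framed_by:
  assumes i: "i \<in> {1..m-1}" and ul: "u \<in> C - {a, b}" "l \<in> C - {a, b}"
    and distinct: "2 \<le> i \<longrightarrow> i + 1 < m \<longrightarrow> u \<noteq> l"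
  shows "\<exists>t. framed_by u l i t"
proof -
  define D where "D = {x \<in> C. x = b \<or> x = a \<or> (x = u \<and> 2 \<le> i) \<or> (x = l \<and> i + 1 < m)}"
  define f where "f x = (if x = b then i else if x = a then i + 1 else if x = u \<and> 2 \<le> i then 1 else m)"
    for x
  have "inj_on f D"
    using i ul distinct b_ne_a three_le_m by (auto simp: inj_on_def D_def f_def)
  moreover have "f ` D \<subseteq> {1..card C}"
    using i three_le_m card_C by (auto simp: D_def f_def)
  ultimately obtain t where t: "t \<in> rankings C" "\<forall>x\<in>D. pos t x = f x"
    using ranking_with_positions[OF finite_C, of D f] by (auto simp: D_def)
  have "framed_by u l i t"
    using t i ul distinct a_in b_in b_ne_a by (auto simp: framed_by_def D_def f_def)
  then show ?thesis ..
qed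

lemma
  assumes t: "framed_by u l i t" and ul: "u \<in> C - {a, b}" "l \<in> C - {a, b}"
    and \<alpha>: "\<alpha> \<in> C" "\<alpha> \<noteq> b"
  shows margin_gain_b_to_top:
      "margin (b_to_top t) \<alpha> - margin t \<alpha> = (1 - w i) * (1 + of_bool (\<alpha> = u))"
    and margin_gain_a_to_bottom:
      "margin (a_to_bottom (b_to_top t)) \<alpha> - margin t \<alpha>
         = (1 - w i) * (1 + of_bool (\<alpha> = u)) + w (i + 1) * (of_bool (\<alpha> = a) - of_bool (\<alpha> = l))"
proof -
  have t': "t \<in> rankings C" "pos t b = i" "pos t a = i + 1"
    "2 \<le> i \<longrightarrow> pos t u = 1" "i + 1 < m \<longrightarrow> pos t l = m"
    using t by (simp_all add: framed_by_def)
  show top: "margin (b_to_top t) \<alpha> - margin t \<alpha> = (1 - w i) * (1 + of_bool (\<alpha> = u))"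
    using margin_b_to_top[OF t'(1,2) _ _ t'(4) \<alpha>] ul by simp
  define s where "s = b_to_top t"
  have h: "hd t \<in> C" "pos t (hd t) = 1"
    using pos_hd[OF t'(1) C_nonempty] by simp_all
  have s: "s \<in> rankings C" "pos s b = 1"
    using b_to_top_Tb[OF t'(1)] by (simp_all add: s_def Tb_def)
  have "i + 1 \<noteq> 1"
    using pos_bounds[OF t'(1) b_in] t'(2) by simp
  then have "a \<noteq> hd t"
    using t'(3) h(2) by auto
  then have "pos s a = i + 1"
    using pos_b_to_top[OF t'(1) a_in] t'(3) b_ne_a by (simp add: s_def)
  moreover have "pos s l = m" if "i + 1 < m"
  proof -
    have "l \<noteq> hd t"
      using t'(5) h(2) that three_le_m by auto
    then show ?thesis
      using pos_b_to_top[OF t'(1)] ul t'(5) that by (simp add: s_def)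
  qed
  ultimately have "margin (a_to_bottom s) \<alpha> - margin s \<alpha>
      = w (i + 1) * (of_bool (\<alpha> = a) - of_bool (\<alpha> = l))"
    using margin_a_to_bottom[OF s] ul \<alpha> by simp
  with top show "margin (a_to_bottom (b_to_top t)) \<alpha> - margin t \<alpha>
      = (1 - w i) * (1 + of_bool (\<alpha> = u)) + w (i + 1) * (of_bool (\<alpha> = a) - of_bool (\<alpha> = l))"
    by (simp add: s_def)
qed

lemma feas2_of_moves:
  assumes J: "finite J" and \<omega>: "\<And>j. j \<in> J \<Longrightarrow> 0 \<le> \<omega> j"
    and src: "\<And>j. j \<in> J \<Longrightarrow> src j \<in> Tba C m a b" and dst: "\<And>j. j \<in> J \<Longrightarrow> dst j \<in> Tb C b"
    and gain: "\<And>\<alpha>. \<alpha> \<in> C \<Longrightarrow> \<alpha> \<noteq> b \<Longrightarrow>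
      sc \<alpha> - sc b \<le> (\<Sum>j\<in>J. \<omega> j * (margin (dst j) \<alpha> - margin (src j) \<alpha>))"
  shows "feas2 C m w N a b (pushforward J \<omega> src) (pushforward J \<omega> dst)"
    and "(\<Sum>t\<in>Tba C m a b. pushforward J \<omega> src t) = sum \<omega> J"
proof -
  have x: "(\<Sum>t\<in>Tba C m a b. pushforward J \<omega> src t * F t) = (\<Sum>j\<in>J. \<omega> j * F (src j))" for F
    using J finite_Tba src by (intro sum_pushforward) auto
  have y: "(\<Sum>t\<in>Tb C b. pushforward J \<omega> dst t * F t) = (\<Sum>j\<in>J. \<omega> j * F (dst j))" for F
    using J finite_Tb dst by (intro sum_pushforward) auto
  show total: "(\<Sum>t\<in>Tba C m a b. pushforward J \<omega> src t) = sum \<omega> J"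
    using x[of "\<lambda>_. 1"] by simp
  have "sum (pushforward J \<omega> dst) (Tb C b) = sum \<omega> J"
    using y[of "\<lambda>_. 1"] by simp
  moreover have "(\<Sum>t\<in>Tb C b. pushforward J \<omega> dst t * margin t \<alpha>)
      - (\<Sum>t\<in>Tba C m a b. pushforward J \<omega> src t * margin t \<alpha>)
      = (\<Sum>j\<in>J. \<omega> j * (margin (dst j) \<alpha> - margin (src j) \<alpha>))" for \<alpha>
    by (simp add: x y right_diff_distrib sum_subtractf)
  moreover have "0 \<le> pushforward J \<omega> f t" for f :: "_ \<Rightarrow> 'c list" and t
    using \<omega> by (auto simp: pushforward_def intro: sum_nonneg)
  ultimately show "feas2 C m w N a b (pushforward J \<omega> src) (pushforward J \<omega> dst)"
    using gain total by (simp add: feas2_iff_margin)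
qed

end

text \<open>For all i, u, l the mass z i * \<pi> u l of voters of type start i u l is moved: a fraction
  1 - \<theta> to the type where b is swapped with the top candidate u, and a fraction \<theta> to the type
  where moreover a is swapped with the bottom candidate l.\<close>

locale transfer_plan = runner_up C m w N a b for C :: "'c set" and m w N a b +
  fixes z :: "nat \<Rightarrow> real" and \<pi> :: "'c \<Rightarrow> 'c \<Rightarrow> real" and \<theta> :: real
    and start :: "nat \<Rightarrow> 'c \<Rightarrow> 'c \<Rightarrow> 'c list"
  assumes z_nonneg: "\<And>i. i \<in> {1..m-1} \<Longrightarrow> 0 \<le> z i"
    and \<pi>_nonneg: "\<And>u l. u \<in> C - {a, b} \<Longrightarrow> l \<in> C - {a, b} \<Longrightarrow> 0 \<le> \<pi> u l"
    and \<pi>_sum: "(\<Sum>u\<in>C - {a, b}. \<Sum>l\<in>C - {a, b}. \<pi> u l) = 1"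
    and \<theta>_nonneg: "0 \<le> \<theta>" and \<theta>_le_1: "\<theta> \<le> 1"
    and start_framed: "\<And>i u l. i \<in> {1..m-1} \<Longrightarrow> u \<in> C - {a, b} \<Longrightarrow> l \<in> C - {a, b} \<Longrightarrow>
      \<pi> u l \<noteq> 0 \<Longrightarrow> framed_by u l i (start i u l)"
begin

definition support :: "(nat \<times> 'c \<times> 'c) set"
  where "support = {(i, u, l). i \<in> {1..m-1} \<and> u \<in> C - {a, b} \<and> l \<in> C - {a, b} \<and> \<pi> u l \<noteq> 0}"

definition moves :: "((nat \<times> 'c \<times> 'c) \<times> bool) set"
  where "moves = support \<times> UNIV"

definition move_weight :: "(nat \<times> 'c \<times> 'c) \<times> bool \<Rightarrow> real"
  where "move_weight = (\<lambda>((i, u, l), demote_a). z i * \<pi> u l * (if demote_a then \<theta> else 1 - \<theta>))"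

definition move_src :: "(nat \<times> 'c \<times> 'c) \<times> bool \<Rightarrow> 'c list"
  where "move_src = (\<lambda>((i, u, l), demote_a). start i u l)"

definition move_dst :: "(nat \<times> 'c \<times> 'c) \<times> bool \<Rightarrow> 'c list"
  where "move_dst = (\<lambda>((i, u, l), demote_a).
    if demote_a then a_to_bottom (b_to_top (start i u l)) else b_to_top (start i u l))"

lemma support_subset: "support \<subseteq> {1..m-1} \<times> (C - {a, b}) \<times> (C - {a, b})"
  by (auto simp: support_def)

lemma finite_moves: "finite moves"
  using finite_subset[OF support_subset] finite_C by (simp add: moves_def)

lemma sum_moves: "(\<Sum>j\<in>moves. f j) = (\<Sum>v\<in>support. \<Sum>demote_a\<in>UNIV. f (v, demote_a))"
  by (simp add: moves_def sum.cartesian_product)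

lemma moves_cases:
  assumes "j \<in> moves"
  obtains i u l demote_a where "j = ((i, u, l), demote_a)" "framed_by u l i (start i u l)"
    "i \<in> {1..m-1}" "u \<in> C - {a, b}" "l \<in> C - {a, b}" "\<pi> u l \<noteq> 0"
  using assms start_framed by (auto simp: moves_def support_def)

lemma move_weight_nonneg: "j \<in> moves \<Longrightarrow> 0 \<le> move_weight j"
  using z_nonneg \<pi>_nonneg \<theta>_nonneg \<theta>_le_1
  by (auto simp: moves_def support_def move_weight_def)

lemma move_src_Tba: "j \<in> moves \<Longrightarrow> move_src j \<in> Tba C m a b"
  by (erule moves_cases) (simp add: move_src_def framed_by_Tba)

lemma move_dst_Tb: "j \<in> moves \<Longrightarrow> move_dst j \<in> Tb C b"
  by (erule moves_cases) (simp add: move_dst_def framed_by_def b_to_top_Tb a_to_bottom_Tb)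

lemma sum_over_support:
  assumes "\<And>i u l. \<pi> u l = 0 \<Longrightarrow> f (i, u, l) = 0"
  shows "(\<Sum>v\<in>support. f v) = (\<Sum>v\<in>{1..m-1} \<times> (C - {a, b}) \<times> (C - {a, b}). f v)"
  using support_subset finite_C assms by (intro sum.mono_neutral_left) (auto simp: support_def)

lemma sum_move_weight: "sum move_weight moves = (\<Sum>i=1..m-1. z i)"
proof -
  have "sum move_weight moves = (\<Sum>(i, u, l)\<in>{1..m-1} \<times> (C - {a, b}) \<times> (C - {a, b}). z i * \<pi> u l)"
    by (simp add: sum_moves UNIV_bool move_weight_def sum_over_support algebra_simps split_def)
  also have "\<dots> = (\<Sum>i=1..m-1. z i)"
    by (simp add: sum.cartesian_product[symmetric] sum_distrib_left[symmetric] \<pi>_sum)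
  finally show ?thesis .
qed

lemma move_pair_margin:
  assumes "(i, u, l) \<in> support" "\<alpha> \<in> C" "\<alpha> \<noteq> b"
  shows "(\<Sum>demote_a\<in>UNIV. move_weight ((i, u, l), demote_a)
      * (margin (move_dst ((i, u, l), demote_a)) \<alpha> - margin (move_src ((i, u, l), demote_a)) \<alpha>))
    = z i * \<pi> u l * ((1 - w i) * (1 + of_bool (\<alpha> = u))
        + \<theta> * w (i + 1) * (of_bool (\<alpha> = a) - of_bool (\<alpha> = l)))"
proof -
  let ?t = "start i u l"
  have t: "framed_by u l i ?t" "u \<in> C - {a, b}" "l \<in> C - {a, b}"
    using assms(1) start_framed by (auto simp: support_def)
  have "(\<Sum>demote_a\<in>UNIV. move_weight ((i, u, l), demote_a)
      * (margin (move_dst ((i, u, l), demote_a)) \<alpha> - margin (move_src ((i, u, l), demote_a)) \<alpha>))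
      = z i * \<pi> u l * ((1 - \<theta>) * (margin (b_to_top ?t) \<alpha> - margin ?t \<alpha>)
          + \<theta> * (margin (a_to_bottom (b_to_top ?t)) \<alpha> - margin ?t \<alpha>))"
    by (simp add: UNIV_bool move_weight_def move_src_def move_dst_def algebra_simps)
  also have "\<dots> = z i * \<pi> u l * ((1 - w i) * (1 + of_bool (\<alpha> = u))
        + \<theta> * w (i + 1) * (of_bool (\<alpha> = a) - of_bool (\<alpha> = l)))"
    unfolding margin_gain_b_to_top[OF t assms(2,3)] margin_gain_a_to_bottom[OF t assms(2,3)]
    by (simp add: algebra_simps)
  finally show ?thesis .
qed

lemma sum_move_margin:
  assumes \<alpha>: "\<alpha> \<in> C" "\<alpha> \<noteq> b"
  shows "(\<Sum>j\<in>moves. move_weight j * (margin (move_dst j) \<alpha> - margin (move_src j) \<alpha>))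
    = b_gain z * (1 + (\<Sum>u\<in>C - {a, b}. \<Sum>l\<in>C - {a, b}. \<pi> u l * of_bool (\<alpha> = u)))
      + \<theta> * a_loss z * (of_bool (\<alpha> = a) - (\<Sum>u\<in>C - {a, b}. \<Sum>l\<in>C - {a, b}. \<pi> u l * of_bool (\<alpha> = l)))"
proof -
  define g where "g = (\<lambda>(u, l). \<pi> u l * (1 + of_bool (\<alpha> = u)))"
  define k where "k = (\<lambda>(u, l). \<pi> u l * (of_bool (\<alpha> = a) - of_bool (\<alpha> = l)))"
  define F where "F = (\<lambda>(i, v). z i * (1 - w i) * g v + \<theta> * z i * w (i + 1) * k v)"
  have "(\<Sum>j\<in>moves. move_weight j * (margin (move_dst j) \<alpha> - margin (move_src j) \<alpha>))
      = (\<Sum>v\<in>support. F v)"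
    unfolding sum_moves
  proof (rule sum.cong[OF refl])
    fix v assume "v \<in> support"
    moreover obtain i u l where "v = (i, u, l)"
      by (cases v) blast
    ultimately show "(\<Sum>demote_a\<in>UNIV. move_weight (v, demote_a)
        * (margin (move_dst (v, demote_a)) \<alpha> - margin (move_src (v, demote_a)) \<alpha>)) = F v"
      using move_pair_margin[OF _ \<alpha>] by (simp add: F_def g_def k_def algebra_simps)
  qed
  also have "\<dots> = (\<Sum>v\<in>{1..m-1} \<times> (C - {a, b}) \<times> (C - {a, b}). F v)"
    by (rule sum_over_support) (simp add: F_def g_def k_def)
  also have "\<dots> = (\<Sum>i=1..m-1. z i * (1 - w i)) * (\<Sum>v\<in>(C - {a, b}) \<times> (C - {a, b}). g v)
      + (\<Sum>i=1..m-1. \<theta> * z i * w (i + 1)) * (\<Sum>v\<in>(C - {a, b}) \<times> (C - {a, b}). k v)"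
    unfolding F_def by (rule sum_product_bilinear)
  also have "(\<Sum>i=1..m-1. z i * (1 - w i)) = b_gain z"
    by (simp add: b_gain_def mult.commute)
  also have "(\<Sum>i=1..m-1. \<theta> * z i * w (i + 1)) = \<theta> * a_loss z"
    by (simp add: a_loss_def sum_distrib_left mult_ac)
  also have "(\<Sum>v\<in>(C - {a, b}) \<times> (C - {a, b}). g v)
      = 1 + (\<Sum>u\<in>C - {a, b}. \<Sum>l\<in>C - {a, b}. \<pi> u l * of_bool (\<alpha> = u))"
    by (simp add: g_def sum.cartesian_product[symmetric] distrib_left sum.distrib \<pi>_sum)
  also have "(\<Sum>v\<in>(C - {a, b}) \<times> (C - {a, b}). k v)
      = of_bool (\<alpha> = a) - (\<Sum>u\<in>C - {a, b}. \<Sum>l\<in>C - {a, b}. \<pi> u l * of_bool (\<alpha> = l))"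
  proof -
    have "(\<Sum>v\<in>(C - {a, b}) \<times> (C - {a, b}). k v)
        = (\<Sum>u\<in>C - {a, b}. \<Sum>l\<in>C - {a, b}. \<pi> u l * of_bool (\<alpha> = a))
          - (\<Sum>u\<in>C - {a, b}. \<Sum>l\<in>C - {a, b}. \<pi> u l * of_bool (\<alpha> = l))"
      by (simp add: k_def sum.cartesian_product[symmetric] right_diff_distrib sum_subtractf)
    also have "(\<Sum>u\<in>C - {a, b}. \<Sum>l\<in>C - {a, b}. \<pi> u l * of_bool (\<alpha> = a)) = of_bool (\<alpha> = a)"
      using \<pi>_sum by (simp add: sum_distrib_right[symmetric])
    finally show ?thesis .
  qed
  finally show ?thesis .
qed

lemma sum_move_margin_a:
  "(\<Sum>j\<in>moves. move_weight j * (margin (move_dst j) a - margin (move_src j) a))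
    = b_gain z + \<theta> * a_loss z"
proof -
  have "(\<Sum>u\<in>C - {a, b}. \<Sum>l\<in>C - {a, b}. \<pi> u l * of_bool (a = u)) = 0"
    "(\<Sum>u\<in>C - {a, b}. \<Sum>l\<in>C - {a, b}. \<pi> u l * of_bool (a = l)) = 0"
    by (auto intro!: sum.neutral)
  then show ?thesis
    using sum_move_margin[OF a_in b_ne_a[symmetric]] by simp
qed

lemma sum_move_margin_other:
  assumes x: "x \<in> C - {a, b}"
  shows "(\<Sum>j\<in>moves. move_weight j * (margin (move_dst j) x - margin (move_src j) x))
    = b_gain z * (1 + (\<Sum>l\<in>C - {a, b}. \<pi> x l)) - \<theta> * a_loss z * (\<Sum>u\<in>C - {a, b}. \<pi> u x)"
proof -
  have singleton: "(C - {a, b}) \<inter> {x} = {x}"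
    using x by blast
  have "(\<Sum>u\<in>C - {a, b}. \<Sum>l\<in>C - {a, b}. \<pi> u l * of_bool (x = u))
      = (\<Sum>u\<in>C - {a, b}. of_bool (x = u) * (\<Sum>l\<in>C - {a, b}. \<pi> u l))"
    by (simp add: sum_distrib_left mult.commute)
  also have "\<dots> = (\<Sum>l\<in>C - {a, b}. \<pi> x l)"
    using finite_C by (simp add: singleton)
  finally have "(\<Sum>u\<in>C - {a, b}. \<Sum>l\<in>C - {a, b}. \<pi> u l * of_bool (x = u))
      = (\<Sum>l\<in>C - {a, b}. \<pi> x l)" .
  moreover have "(\<Sum>u\<in>C - {a, b}. \<Sum>l\<in>C - {a, b}. \<pi> u l * of_bool (x = l))
      = (\<Sum>u\<in>C - {a, b}. \<pi> u x)"
    using finite_C by (simp add: singleton)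
  ultimately show ?thesis
    using sum_move_margin[of x] x by simp
qed

lemma feas2_of_plan:
  assumes cover_a: "sc a - sc b \<le> b_gain z + \<theta> * a_loss z"
    and cover_others: "\<And>x. x \<in> C - {a, b} \<Longrightarrow> \<theta> * a_loss z * (\<Sum>u\<in>C - {a, b}. \<pi> u x)
      \<le> b_gain z * (1 + (\<Sum>l\<in>C - {a, b}. \<pi> x l)) + (sc b - sc x)"
  shows "\<exists>x y. feas2 C m w N a b x y \<and> (\<Sum>t\<in>Tba C m a b. x t) = (\<Sum>i=1..m-1. z i)"
proof -
  have gain: "sc \<alpha> - sc b
      \<le> (\<Sum>j\<in>moves. move_weight j * (margin (move_dst j) \<alpha> - margin (move_src j) \<alpha>))"
    if "\<alpha> \<in> C" "\<alpha> \<noteq> b" for \<alpha>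
  proof (cases "\<alpha> = a")
    case True
    then show ?thesis
      using sum_move_margin_a cover_a by simp
  next
    case False
    then have "\<alpha> \<in> C - {a, b}"
      using that by simp
    then show ?thesis
      using sum_move_margin_other cover_others by fastforce
  qed
  let ?x = "pushforward moves move_weight move_src"
  let ?y = "pushforward moves move_weight move_dst"
  have "feas2 C m w N a b ?x ?y"
    by (rule feas2_of_moves(1)) (use finite_moves move_weight_nonneg move_src_Tba move_dst_Tb gain in auto)
  moreover have "(\<Sum>t\<in>Tba C m a b. ?x t) = (\<Sum>i=1..m-1. z i)"
    unfolding sum_move_weight[symmetric]
    by (rule feas2_of_moves(2)) (use finite_moves move_weight_nonneg move_src_Tba move_dst_Tb gain in auto)
  ultimately show ?thesis
    by blast
qed

end

context runner_up
begin

definition b_lead :: real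
  where "b_lead = (\<Sum>x\<in>C - {a, b}. sc b - sc x)"

lemma b_lead_nonneg: "0 \<le> b_lead"
  unfolding b_lead_def using b_second by (intro sum_nonneg) simp

lemma card_others: "card (C - {a, b}) = m - 2"
  using card_C a_in b_in b_ne_a finite_C by (simp add: card_Diff_subset)

lemma score_deficit: "real m * (voters * wbar w m - sc b) = (sc a - sc b) - b_lead"
proof -
  have "(\<Sum>x\<in>C. sc x) = (\<Sum>x\<in>C - {a, b}. sc x) + (\<Sum>x\<in>{a, b}. sc x)"
    using finite_C a_in b_in by (intro sum.subset_diff) auto
  then have "voters * (m * wbar w m) = (\<Sum>x\<in>C - {a, b}. sc x) + sc a + sc b"
    using sum_score[of N] b_ne_a by simp
  moreover have "real (m - 2) = real m - 2"
    using two_le_m by simp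
  ultimately show ?thesis
    using card_others by (simp add: b_lead_def sum_subtractf algebra_simps)
qed

lemma
  assumes "\<And>i. i \<in> {1..m-1} \<Longrightarrow> 0 \<le> z i"
  shows b_gain_nonneg: "0 \<le> b_gain z" and a_loss_nonneg: "0 \<le> a_loss z"
  using assms w_le_1 w_nonneg by (auto simp: b_gain_def a_loss_def intro!: sum_nonneg)

lemma exists_framed_starts:
  assumes "2 \<le> card (C - {a, b}) \<longrightarrow> (\<forall>u. \<pi> u u = 0)"
  shows "\<exists>start. \<forall>i\<in>{1..m-1}. \<forall>u\<in>C - {a, b}. \<forall>l\<in>C - {a, b}.
    \<pi> u l \<noteq> 0 \<longrightarrow> framed_by u l i (start i u l)"
proof -
  have "\<exists>t. framed_by u l i t"
    if "i \<in> {1..m-1}" "u \<in> C - {a, b}" "l \<in> C - {a, b}" "\<pi> u l \<noteq> 0" for i u l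
  proof (rule exists_framed_by[OF that(1-3)])
    show "2 \<le> i \<longrightarrow> i + 1 < m \<longrightarrow> u \<noteq> l"
      using assms card_others that(4) by auto
  qed
  then show ?thesis
    by (intro exI[of _ "\<lambda>i u l. SOME t. framed_by u l i t"]) (blast intro: someI_ex)
qed

lemma others_nonempty: "C - {a, b} \<noteq> {}"
proof
  assume "C - {a, b} = {}"
  then have "card (C - {a, b}) = 0"
    by (simp only: card.empty)
  with card_others three_le_m show False
    by simp
qed

lemma feas4_excess_bounds:
  assumes "feas4 C m w N a b z"
  defines "R \<equiv> max 0 (sc a - sc b - b_gain z)"
  shows "R \<le> a_loss z" and "R \<le> (card (C - {a, b}) + 1) * b_gain z + b_lead"
    and "0 < b_gain z + b_lead"
proof -
  have covers_a: "sc a - sc b \<le> b_gain z + a_loss z"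
    and covers_average: "voters * wbar w m - sc b \<le> b_gain z"
    and z: "\<And>i. i \<in> {1..m-1} \<Longrightarrow> 0 \<le> z i"
    using assms by (simp_all add: feas4_iff)
  show "R \<le> a_loss z"
    using covers_a a_loss_nonneg[OF z] by (simp add: R_def)
  have deficit: "sc a - sc b \<le> m * b_gain z + b_lead"
    using score_deficit mult_left_mono[OF covers_average, of "real m"] by simp
  have "1 * b_gain z \<le> m * b_gain z"
    using b_gain_nonneg[OF z] two_le_m by (intro mult_right_mono) auto
  then show "R \<le> (card (C - {a, b}) + 1) * b_gain z + b_lead"
    using deficit b_lead_nonneg three_le_m card_others
    unfolding R_def max.bounded_iff by (simp add: of_nat_diff algebra_simps)
  have "0 < sc a - sc b"
    using a_wins[OF b_in b_ne_a] by simp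
  also have "\<dots> \<le> m * (b_gain z + b_lead)"
    using deficit mult_right_mono[OF _ b_lead_nonneg, of 1 "real m"] two_le_m
    by (simp add: algebra_simps)
  finally show "0 < b_gain z + b_lead"
    using two_le_m by (simp add: zero_less_mult_iff)
qed

lemma feas2_of_feas4:
  assumes "feas4 C m w N a b z"
  shows "\<exists>x y. feas2 C m w N a b x y \<and> (\<Sum>t\<in>Tba C m a b. x t) = (\<Sum>i=1..m-1. z i)"
proof -
  have z: "\<And>i. i \<in> {1..m-1} \<Longrightarrow> 0 \<le> z i"
    using assms by (simp add: feas4_iff)
  define R where "R = max 0 (sc a - sc b - b_gain z)"
  note R = feas4_excess_bounds[OF assms, folded R_def]
  \<comment> \<open>If a_loss z = 0 then R = 0 as well, and \<theta> = 0 by the convention x / 0 = 0.\<close>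
  define \<theta> where "\<theta> = R / a_loss z"
  have \<theta>: "0 \<le> \<theta>" "\<theta> \<le> 1" "\<theta> * a_loss z = R"
    using R(1) a_loss_nonneg[OF z] by (auto simp: \<theta>_def R_def divide_le_eq_1)
  obtain \<pi> where \<pi>: "\<forall>u\<in>C - {a, b}. \<forall>l\<in>C - {a, b}. 0 \<le> \<pi> u l"
      "(\<Sum>u\<in>C - {a, b}. \<Sum>l\<in>C - {a, b}. \<pi> u l) = 1"
      "2 \<le> card (C - {a, b}) \<longrightarrow> (\<forall>u. \<pi> u u = 0)"
      "\<forall>x\<in>C - {a, b}. R * (\<Sum>u\<in>C - {a, b}. \<pi> u x)
         \<le> b_gain z * (1 + (\<Sum>l\<in>C - {a, b}. \<pi> x l)) + (sc b - sc x)"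
    using exists_coupling[of "C - {a, b}" "b_gain z" "\<lambda>x. sc b - sc x" R] finite_C others_nonempty
      b_gain_nonneg[OF z] b_second R(2,3) by (auto simp: b_lead_def)
  obtain start where start: "\<forall>i\<in>{1..m-1}. \<forall>u\<in>C - {a, b}. \<forall>l\<in>C - {a, b}.
      \<pi> u l \<noteq> 0 \<longrightarrow> framed_by u l i (start i u l)"
    using exists_framed_starts[of \<pi>] \<pi>(3) by blast
  interpret plan: transfer_plan C m w N a b z \<pi> \<theta> start
    using z \<pi>(1,2) \<theta>(1,2) start by unfold_locales auto
  show ?thesis
    using plan.feas2_of_plan \<theta>(3) \<pi>(4) by (simp add: R_def)
qed

end

section \<open>(P5) as the dual of (P4)\<close>

context runner_up
begin

definition column :: "nat \<Rightarrow> real \<times> real"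
  where "column i = (1 - w i + w (i + 1), 1 - w i)"

definition demand :: "real \<times> real"
  where "demand = (sc a - sc b, voters * wbar w m - sc b)"

lemma feas4_iff_covering: "feas4 C m w N a b z \<longleftrightarrow> covering_feasible {1..m-1} column demand z"
  by (simp add: feas4_def covering_feasible_def column_def demand_def Basis_prod_def
      inner_prod_def fst_sum snd_sum mult.commute conj_ac)

lemma feas5_iff_packing: "feas5 m w l u \<longleftrightarrow> packing_feasible {1..m-1} column (l, u - l)"
  by (auto simp: feas5_def packing_feasible_def column_def Basis_prod_def algebra_simps)

lemma obj5_eq: "obj5 C m w N a b l u = demand \<bullet> (l, u - l)"
  by (simp add: obj5_def demand_def algebra_simps)

lemma column_nonneg: "i \<in> {1..m-1} \<Longrightarrow> k \<in> Basis \<Longrightarrow> 0 \<le> column i \<bullet> k"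
  using w_le_1[of i] w_nonneg[of "i + 1"] by (auto simp: column_def Basis_prod_def)

lemma val2_eq_val4: "val2 C m w N a b = val4 C m w N a b"
proof -
  have "{ereal (\<Sum>t\<in>Tba C m a b. x t) | x y. feas2 C m w N a b x y}
      = {ereal (\<Sum>i=1..m-1. z i) | z. feas4 C m w N a b z}"
  proof (intro equalityI subsetI)
    fix v assume "v \<in> {ereal (\<Sum>t\<in>Tba C m a b. x t) | x y. feas2 C m w N a b x y}"
    then obtain x y where "feas2 C m w N a b x y" "v = ereal (\<Sum>t\<in>Tba C m a b. x t)"
      by blast
    with feas4_of_feas2 show "v \<in> {ereal (\<Sum>i=1..m-1. z i) | z. feas4 C m w N a b z}"
      by (metis (mono_tags, lifting) mem_Collect_eq)
  next
    fix v assume "v \<in> {ereal (\<Sum>i=1..m-1. z i) | z. feas4 C m w N a b z}"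
    then obtain z where "feas4 C m w N a b z" "v = ereal (\<Sum>i=1..m-1. z i)"
      by blast
    with feas2_of_feas4 show "v \<in> {ereal (\<Sum>t\<in>Tba C m a b. x t) | x y. feas2 C m w N a b x y}"
      by (metis (mono_tags, lifting) mem_Collect_eq)
  qed
  then show ?thesis
    by (simp add: val2_def val4_def)
qed

lemma feasible2_iff_feasible4: "(\<exists>x y. feas2 C m w N a b x y) \<longleftrightarrow> (\<exists>z. feas4 C m w N a b z)"
  using feas4_of_feas2 feas2_of_feas4 by blast

lemma ex_feas5_iff_packing:
  "(\<exists>l u. feas5 m w l u \<and> P (obj5 C m w N a b l u))
    \<longleftrightarrow> (\<exists>y. packing_feasible {1..m-1} column y \<and> P (demand \<bullet> y))"
proof
  assume "\<exists>y. packing_feasible {1..m-1} column y \<and> P (demand \<bullet> y)"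
  then obtain y where "packing_feasible {1..m-1} column y" "P (demand \<bullet> y)"
    by blast
  then show "\<exists>l u. feas5 m w l u \<and> P (obj5 C m w N a b l u)"
    by (intro exI[of _ "fst y"] exI[of _ "fst y + snd y"]) (simp add: feas5_iff_packing obj5_eq)
qed (auto simp: feas5_iff_packing obj5_eq)

lemma val4_eq_val5: "val4 C m w N a b = val5 C m w N a b"
proof -
  have "{ereal (obj5 C m w N a b l u) | l u. feas5 m w l u}
      = {ereal (demand \<bullet> y) | y. packing_feasible {1..m-1} column y}"
    using ex_feas5_iff_packing[of "\<lambda>r. v = ereal r" for v] by blast
  moreover have I: "finite {1..m-1}" "{1..m-1} \<noteq> {}"
    using two_le_m by auto
  ultimately show ?thesis
    using covering_lp_duality[OF I column_nonneg, where c = demand]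
    by (simp add: val4_def val5_def feas4_iff_covering)
qed

lemma unbounded5_iff_infeasible4:
  "(\<forall>B. \<exists>l u. feas5 m w l u \<and> obj5 C m w N a b l u > B) \<longleftrightarrow> \<not> (\<exists>z. feas4 C m w N a b z)"
proof -
  have I: "finite {1..m-1}" "{1..m-1} \<noteq> {}"
    using two_le_m by auto
  then show ?thesis
    using packing_unbounded_iff_covering_infeasible[OF I column_nonneg, where c = demand]
      ex_feas5_iff_packing[of "\<lambda>r. B < r" for B]
    by (simp add: feas4_iff_covering)
qed

end

theorem theorem11:
  fixes C :: "'c set" and m :: nat and w :: "nat \<Rightarrow> real"
    and N :: "'c list \<Rightarrow> nat" and a b :: 'c
  assumes "m \<ge> 3"
    and "card C = m"
    and "w 1 = 1" and "w m = 0"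
    and "\<And>i j. 1 \<le> i \<Longrightarrow> i \<le> j \<Longrightarrow> j \<le> m \<Longrightarrow> w j \<le> w i"
    and "a \<in> C" and "b \<in> C" and "b \<noteq> a"
    and "\<And>\<alpha>. \<alpha> \<in> C \<Longrightarrow> \<alpha> \<noteq> a \<Longrightarrow> score C w N a > score C w N \<alpha>"
    and "\<And>\<alpha>. \<alpha> \<in> C \<Longrightarrow> \<alpha> \<noteq> a \<Longrightarrow> score C w N b \<ge> score C w N \<alpha>"
  shows "val2 C m w N a b = val5 C m w N a b
       \<and> val4 C m w N a b = val5 C m w N a b
       \<and> ((\<forall>B. \<exists>l u. feas5 m w l u \<and> obj5 C m w N a b l u > B)
           \<longleftrightarrow> (\<not> (\<exists>x y. feas2 C m w N a b x y) \<and> \<not> (\<exists>z. feas4 C m w N a b z)))"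
proof -
  interpret runner_up C m w N a b
    using assms by unfold_locales auto
  show ?thesis
    using val2_eq_val4 val4_eq_val5 unbounded5_iff_infeasible4 feasible2_iff_feasible4 by simp
qed

end
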